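(* Let $q_1,\dots,q_k$ be real polynomials, all of the same degree $m\ge1$, with $q_i(x)\to\infty$ as $x\to\infty$; write $a^{(i)}_m>0$ for the leading coefficient of $q_i$ and $c_{i,j}=(a^{(j)}_m/a^{(i)}_m)^{1/m}$. Let $1\le t_1<\dots<t_u\le k$. Then there exist integers $M=M(t_1,\dots,t_u)\ge0$ and $a=a(t_1,\dots,t_u)>0$ with $a\ge M$ such that $$\lim_{r\to\infty}\frac1r\Big|\Big\{1\le n\le r:\ q_{t_1}(n)\in\bigcap_{i=1}^u q_{t_i}(\mathbb N)\Big\}\Big|=\frac{M(t_1,\dots,t_u)}{a(t_1,\dots,t_u)},$$ where for $u=1$, $M=a=1$. Moreover, for $u>1$: (1) If for every $2\le i\le u$ one has $c_{t_i,t_1}=\beta_i/\alpha_i\in\mathbb Q$ with coprime positive integers $\alpha_i,\beta_i$, and there is $x_i\in\mathbb Q$ with $q_{t_i}(y)=q_{t_1}(c_{t_1,t_i}(y-x_i))$ for all $y\in\mathbb R$, then $a(t_1,\dots,t_u)=\mathrm{lcm}(\alpha_2,\dots,\alpha_u)$ and $M(t_1,\dots,t_u)=|(W_2\times\dots\times W_u)\cap V|$, where $W_i=\{0,1,\dots,\alpha_i-1\}\cap\frac{\alpha_i}{\beta_i}(\mathbb Z-x_i)$ and $V=\{(w_2,\dots,w_u): w_i-w_j\in\alpha_j\mathbb N-\alpha_i\mathbb N\ \forall i,j\}$ (i.e. the tuples for which the congruences $n\equiv w_i \pmod{\alpha_i}$, $2\le i\le u$, have a common solution). (2) If $c_{t_i,t_1}\notin\mathbb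 Q$ for some $i$, or $c_{t_i,t_1}\in\mathbb Q$ but for some $2\le i\le u$ no $x_i\in\mathbb Q$ satisfies the identity in (1), then $M(t_1,\dots,t_u)=0$. (3) Let $R$ be such that all $q_i$ are strictly increasing on $[R,\infty)$, put $A_i=q_1^{-1}(q_i(\mathbb N))$ (preimages taken in $[R,\infty)$) and $A=\bigcup_{i=1}^kA_i$. Then $$\lim_{r\to\infty}\frac{|\bigcap_{j=1}^uA_{t_j}\cap[1,r]|}r=c_{t_1,1}\frac{M(t_1,\dots,t_u)}{a(t_1,\dots,t_u)},$$ and $$\lim_{r\to\infty}\frac{|A\cap[1,r]|}r=\sum_{u=1}^k(-1)^{u+1}\sum_{1\le t_1<\dots<t_u\le k}c_{t_1,1}\frac{M(t_1,\dots,t_u)}{a(t_1,\dots,t_u)}=:c\ge1.$$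
   Context: $|\Gamma|$ denotes the cardinality of a finite set $\Gamma$; $\mathbb N$ is the set of positive integers. *)

theory Defs
  imports Complex_Main "HOL-Library.FuncSet" "HOL-Computational_Algebra.Polynomial"
begin

definition cc :: "(nat \<Rightarrow> real poly) \<Rightarrow> nat \<Rightarrow> nat \<Rightarrow> nat \<Rightarrow> real" where
  "cc q m i j = (lead_coeff (q j) / lead_coeff (q i)) powr (1 / real m)"

definition polyvals :: "real poly \<Rightarrow> real set" where
  "polyvals p = {poly p (real l) | l. l \<ge> 1}"

definition Aset :: "(nat \<Rightarrow> real poly) \<Rightarrow> real \<Rightarrow> nat \<Rightarrow> real set" where
  "Aset q R i = {x. R \<le> x \<and> poly (q 1) x \<in> polyvals (q i)}"

definition Wset :: "nat \<Rightarrow> nat \<Rightarrow> real \<Rightarrow> int set" where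
  "Wset \<alpha> \<beta> x = {w. 0 \<le> w \<and> w < int \<alpha> \<and>
      (\<exists>z::int. real_of_int w = (real \<alpha> / real \<beta>) * (real_of_int z - x))}"

definition diffset :: "nat \<Rightarrow> nat \<Rightarrow> int set" where
  "diffset aj ai = {int aj * int s - int ai * int t | s t. s \<ge> 1 \<and> t \<ge> 1}"

end

theory Submission
  imports Defs
begin

text \<open>
  For real polynomials \<open>P\<close>, \<open>Q\<close> of the same degree \<open>m\<close> with positive leading coefficients,
  the equation \<open>Q y = P s\<close> has for large \<open>s\<close> exactly one large solution, and it equals
  \<open>c s + d + O(1/s)\<close> with \<open>c = (lead_coeff P / lead_coeff Q)\<^bsup>1/m\<^esup>\<close>: choosing \<open>d\<close> so that
  \<open>Q (c s + d)\<close> and \<open>P s\<close> agree in their two top coefficients leaves a difference of order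
  \<open>s\<^bsup>m-2\<^esup>\<close>, while \<open>Q\<close> increases at rate \<open>s\<^bsup>m-1\<^esup>\<close>.

  If \<open>c\<close> is irrational, two integers \<open>a < b \<le> a + H\<close> with \<open>P a, P b \<in> Q(\<nat>)\<close> would put
  \<open>c (b - a)\<close> within \<open>O(1/a)\<close> of an integer, so such \<open>n\<close> have density zero. If \<open>c\<close> is
  rational and there are infinitely many of them, then along a residue class their offsets from
  the line \<open>c n + d\<close> differ by integers and tend to zero, so they vanish, which forces the identity
  \<open>Q (c y + d) = P y\<close>; then \<open>P n \<in> Q(\<nat>)\<close> means that \<open>n\<close> lies in the lattice
  \<open>(\<alpha>/\<beta>)(\<int> - x)\<close>. Intersecting these conditions for \<open>t\<^sub>2, \<dots>, t\<^sub>u\<close> gives an eventually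
  periodic set of period \<open>lcm \<alpha>\<^sub>i\<close>, whose residues are counted with the Chinese remainder
  theorem.

  For part (3), \<open>q\<^sub>1\<^sup>-\<^sup>1 \<circ> q\<^sub>t\<^sub>1\<close> is asymptotically linear with slope \<open>c\<^sub>t\<^sub>1\<^sub>,\<^sub>1\<close>, which
  rescales densities, and inclusion--exclusion handles the union.
\<close>

section \<open>Growth of real polynomials\<close>

lemma poly_mult_le_power_if_coeffs_vanish:
  fixes g :: "real poly"
  assumes "\<forall>i\<ge>n. coeff g i = 0"
  shows "\<exists>C\<ge>0. \<forall>y\<ge>1. \<bar>poly g y\<bar> * y \<le> C * y ^ n"
proof (cases "n = 0")
  case True
  then have "g = 0" using assms by (auto intro: poly_eqI)
  then show ?thesis by (intro exI[of _ 0]) auto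
next
  case False
  have dg: "degree g \<le> n - 1"
    using assms False by (intro degree_le) auto
  define C where "C = (\<Sum>i\<le>degree g. \<bar>coeff g i\<bar>)"
  show ?thesis
  proof (intro exI conjI allI impI)
    show "C \<ge> 0" unfolding C_def by (intro sum_nonneg) auto
    fix y :: real assume y: "y \<ge> 1"
    have "\<bar>poly g y\<bar> * y = \<bar>\<Sum>i\<le>degree g. coeff g i * y ^ i * y\<bar>"
      using y by (simp add: poly_altdef sum_distrib_right[symmetric] abs_mult)
    also have "\<dots> \<le> (\<Sum>i\<le>degree g. \<bar>coeff g i * y ^ i * y\<bar>)"
      by (rule sum_abs)
    also have "\<dots> \<le> (\<Sum>i\<le>degree g. \<bar>coeff g i\<bar> * y ^ n)"
    proof (rule sum_mono)
      fix i assume i: "i \<in> {..degree g}"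
      have "y ^ i * y = y ^ (Suc i)" by simp
      also have "\<dots> \<le> y ^ n" using y i dg False by (intro power_increasing) auto
      finally show "\<bar>coeff g i * y ^ i * y\<bar> \<le> \<bar>coeff g i\<bar> * y ^ n"
        using y by (simp add: abs_mult mult.assoc mult_left_mono)
    qed
    also have "\<dots> = C * y ^ n" unfolding C_def by (simp add: sum_distrib_right)
    finally show "\<bar>poly g y\<bar> * y \<le> C * y ^ n" .
  qed
qed

lemma poly_ge_half_lead_coeff:
  fixes r :: "real poly"
  assumes "lead_coeff r > 0"
  shows "\<exists>Z\<ge>1. \<forall>z\<ge>Z. poly r z \<ge> lead_coeff r / 2 * z ^ degree r"
proof -
  define j where "j = degree r"
  define L where "L = lead_coeff r"
  define s where "s = r - monom L j"
  have "\<forall>i\<ge>j. coeff s i = 0"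
    unfolding s_def L_def j_def by (auto simp: coeff_monom coeff_eq_0)
  from poly_mult_le_power_if_coeffs_vanish[OF this]
  obtain C where C: "C \<ge> 0" "\<forall>y\<ge>1. \<bar>poly s y\<bar> * y \<le> C * y ^ j"
    by blast
  have L0: "L > 0" using assms L_def by simp
  show ?thesis
  proof (intro exI conjI allI impI)
    show "max 1 (2 * C / L) \<ge> 1" by simp
    fix z :: real assume z: "max 1 (2 * C / L) \<le> z"
    then have z1: "z \<ge> 1" and z2: "2 * C / L \<le> z" by auto
    have "\<bar>poly s z\<bar> * z \<le> C * z ^ j" using C z1 by auto
    also have "C * z ^ j \<le> (L / 2 * z) * z ^ j"
      using z2 L0 z1 by (intro mult_right_mono) (auto simp: field_simps)
    finally have "\<bar>poly s z\<bar> \<le> L / 2 * z ^ j" using z1 by (simp add: mult_ac)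
    moreover have "poly r z = L * z ^ j + poly s z" unfolding s_def by (simp add: poly_monom)
    ultimately show "poly r z \<ge> lead_coeff r / 2 * z ^ degree r"
      unfolding L_def j_def by linarith
  qed
qed

lemma poly_eventually_ge:
  fixes P :: "real poly" and B :: real
  assumes "lead_coeff P > 0" and "degree P \<ge> 1"
  shows "\<exists>S\<ge>1. \<forall>s\<ge>S. poly P s \<ge> B"
proof -
  obtain Z where Z: "Z \<ge> 1" "\<forall>z\<ge>Z. poly P z \<ge> lead_coeff P / 2 * z ^ degree P"
    using poly_ge_half_lead_coeff[OF assms(1)] by blast
  show ?thesis
  proof (intro exI conjI allI impI)
    show "max Z (2 * \<bar>B\<bar> / lead_coeff P) \<ge> 1" using Z by simp
    fix s assume s: "max Z (2 * \<bar>B\<bar> / lead_coeff P) \<le> s"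
    have "s ^ degree P \<ge> s"
      using s Z assms(2) by (metis max.bounded_iff order_trans power_increasing power_one_right)
    then have "lead_coeff P / 2 * s ^ degree P \<ge> lead_coeff P / 2 * s"
      using assms(1) by simp
    moreover have "lead_coeff P / 2 * s \<ge> \<bar>B\<bar>"
      using s assms(1) by (simp add: field_simps)
    ultimately show "poly P s \<ge> B" using Z s by force
  qed
qed

lemma lead_coeff_pos_if_tendsto_at_top:
  fixes p :: "real poly"
  assumes "degree p \<ge> 1" and "filterlim (poly p) at_top at_top"
  shows "lead_coeff p > 0"
proof (rule ccontr)
  assume "\<not> lead_coeff p > 0"
  moreover have "lead_coeff p \<noteq> 0" using assms(1) by auto
  ultimately have "lead_coeff p < 0" by linarith
  then have "lead_coeff (- p) > 0" by simp
  then obtain S where S: "\<forall>s\<ge>S. poly (- p) s \<ge> 0"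
    using poly_eventually_ge[of "- p" 0] assms(1) by auto
  obtain N where "\<forall>x\<ge>N. poly p x \<ge> 1"
    using assms(2) unfolding filterlim_at_top eventually_at_top_linorder by blast
  then have "poly p (max N S) \<ge> 1" by simp
  then show False using S[rule_format, of "max N S"] by simp
qed

lemma poly_increment_lower_bound:
  fixes Q :: "real poly"
  assumes lead: "lead_coeff Q > 0" and deg: "degree Q \<ge> 1"
  shows "\<exists>\<kappa>>0. \<exists>Z\<ge>1. \<forall>v u. Z \<le> v \<longrightarrow> v \<le> u \<longrightarrow>
           poly Q u - poly Q v \<ge> \<kappa> * v ^ (degree Q - 1) * (u - v)"
proof -
  define \<kappa> where "\<kappa> = real (degree Q) * lead_coeff Q / 2"
  have "lead_coeff (pderiv Q) = real (degree Q) * lead_coeff Q"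
    using deg by (cases "degree Q") (auto simp: degree_pderiv coeff_pderiv)
  then obtain Z where Z: "Z \<ge> 1" "\<forall>z\<ge>Z. poly (pderiv Q) z \<ge> \<kappa> * z ^ (degree Q - 1)"
    using poly_ge_half_lead_coeff[of "pderiv Q"] lead deg
    by (auto simp: degree_pderiv \<kappa>_def)
  have "poly Q u - poly Q v \<ge> \<kappa> * v ^ (degree Q - 1) * (u - v)" if v: "Z \<le> v" "v \<le> u" for u v
  proof (cases "v = u")
    case False
    then have "v < u" using v by simp
    from MVT2[OF this, of "poly Q" "poly (pderiv Q)"] obtain z where
      z: "v < z" "z < u" "poly Q u - poly Q v = (u - v) * poly (pderiv Q) z"
      using poly_DERIV by blast
    have "\<kappa> * v ^ (degree Q - 1) \<le> \<kappa> * z ^ (degree Q - 1)"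
      using v z Z lead deg by (intro mult_left_mono power_mono) (auto simp: \<kappa>_def)
    also have "\<dots> \<le> poly (pderiv Q) z" using Z z v by auto
    finally show ?thesis using z \<open>v < u\<close> by (simp add: mult.commute mult_right_mono)
  qed simp
  moreover have "\<kappa> > 0" using lead deg by (simp add: \<kappa>_def)
  ultimately show ?thesis using Z(1) by blast
qed

lemma strict_mono_on_if_increment_bound:
  fixes f :: "real \<Rightarrow> real"
  assumes inc: "\<forall>v u. Z \<le> v \<longrightarrow> v \<le> u \<longrightarrow> f u - f v \<ge> \<kappa> * v ^ j * (u - v)"
    and \<kappa>: "\<kappa> > 0" and Z: "Z > 0"
  shows "strict_mono_on {Z..} f"
proof (rule strict_mono_onI)
  fix v u assume "v \<in> {Z..}" "u \<in> {Z..}" "v < u"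
  then have "\<kappa> * v ^ j * (u - v) > 0" using \<kappa> Z by simp
  moreover have "f u - f v \<ge> \<kappa> * v ^ j * (u - v)" using inc \<open>v \<in> {Z..}\<close> \<open>v < u\<close> by auto
  ultimately show "f v < f u" by linarith
qed

lemma increment_bound_root_close:
  fixes f :: "real \<Rightarrow> real"
  assumes inc: "\<forall>v u. Z \<le> v \<longrightarrow> v \<le> u \<longrightarrow> f u - f v \<ge> \<kappa> * v ^ j * (u - v)"
    and \<kappa>: "\<kappa> > 0" and Z: "Z \<ge> 0" and w: "Z \<le> w" "w \<le> u0 - 1"
    and err: "\<bar>f u0 - b\<bar> < \<kappa> * w ^ j"
    and y: "Z \<le> y" "f y = b"
  shows "\<kappa> * w ^ j * \<bar>y - u0\<bar> \<le> \<bar>f u0 - b\<bar>"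
proof -
  have pw: "\<kappa> * w ^ j \<le> \<kappa> * v ^ j" if "w \<le> v" for v
    using that w Z \<kappa> by (intro mult_left_mono power_mono) auto
  have "0 \<le> \<kappa> * w ^ j" using w Z \<kappa> by simp
  have upper: "y \<le> u0 + 1"
  proof (rule ccontr)
    assume "\<not> y \<le> u0 + 1"
    then have "f y - f u0 \<ge> \<kappa> * u0 ^ j * (y - u0)" using inc w by auto
    moreover have "\<kappa> * u0 ^ j * (y - u0) \<ge> \<kappa> * u0 ^ j * 1"
      using \<open>\<not> y \<le> u0 + 1\<close> pw[of u0] w \<open>0 \<le> \<kappa> * w ^ j\<close>
      by (intro mult_left_mono) auto
    ultimately show False using pw[of u0] w err y by linarith
  qed
  have lower: "y \<ge> u0 - 1"
  proof (rule ccontr)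
    assume "\<not> y \<ge> u0 - 1"
    then have "f (u0 - 1) - f y \<ge> \<kappa> * y ^ j * (u0 - 1 - y)" using inc y by auto
    moreover have "\<kappa> * y ^ j * (u0 - 1 - y) \<ge> 0" using \<open>\<not> y \<ge> u0 - 1\<close> y Z \<kappa> by simp
    moreover have "f u0 - f (u0 - 1) \<ge> \<kappa> * (u0 - 1) ^ j * 1" using inc[rule_format, of "u0 - 1" u0] w by auto
    ultimately show False using pw[of "u0 - 1"] w err y unfolding abs_less_iff by linarith
  qed
  define v where "v = min y u0"
  have v: "w \<le> v" "Z \<le> v" using upper lower w y unfolding v_def by auto
  have "\<bar>f y - f u0\<bar> \<ge> \<kappa> * v ^ j * \<bar>y - u0\<bar>"
  proof (cases "y \<le> u0")
    case True
    then have "f u0 - f y \<ge> \<kappa> * y ^ j * (u0 - y)" using inc v unfolding v_def by auto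
    then show ?thesis using True unfolding v_def by auto
  next
    case False
    then have "f y - f u0 \<ge> \<kappa> * u0 ^ j * (y - u0)" using inc v unfolding v_def by auto
    then show ?thesis using False unfolding v_def by auto
  qed
  moreover have "\<kappa> * w ^ j * \<bar>y - u0\<bar> \<le> \<kappa> * v ^ j * \<bar>y - u0\<bar>"
    using pw v by (intro mult_right_mono) auto
  ultimately show ?thesis using y by (simp add: abs_minus_commute)
qed

lemma increment_bound_root_exists:
  fixes f :: "real \<Rightarrow> real"
  assumes inc: "\<forall>v u. Z \<le> v \<longrightarrow> v \<le> u \<longrightarrow> f u - f v \<ge> \<kappa> * v ^ j * (u - v)"
    and \<kappa>: "\<kappa> > 0" and Z: "Z \<ge> 0" and w: "Z \<le> w" "w \<le> u0 - 1"
    and err: "\<bar>f u0 - b\<bar> < \<kappa> * w ^ j"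
    and cont: "\<forall>x. isCont f x" and low: "f Z \<le> b"
  shows "\<exists>y\<ge>Z. f y = b"
proof -
  have "f (u0 + 1) - f u0 \<ge> \<kappa> * u0 ^ j"
    using inc[rule_format, of u0 "u0 + 1"] w by simp
  moreover have "\<kappa> * w ^ j \<le> \<kappa> * u0 ^ j" using w Z \<kappa> by (intro mult_left_mono power_mono) auto
  ultimately have "b \<le> f (u0 + 1)" using err unfolding abs_less_iff by linarith
  then obtain y where "Z \<le> y" "f y = b" using IVT[of f Z b "u0 + 1"] low w cont by auto
  then show ?thesis by blast
qed

section \<open>Composing with a linear polynomial\<close>

lemma coeff_linear_power_above:
  fixes c d :: real
  assumes "i > j"
  shows "coeff ([:d, c:] ^ j) i = 0"
proof -
  have "degree ([:d, c:] ^ j) \<le> degree [:d, c:] * j" by (rule degree_power_le)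
  also have "\<dots> \<le> j" by simp
  finally show ?thesis using assms by (intro coeff_eq_0) auto
qed

lemma coeff_linear_mult:
  fixes c d :: real
  shows "coeff ([:d, c:] * p) i = d * coeff p i + (case i of 0 \<Rightarrow> 0 | Suc i' \<Rightarrow> c * coeff p i')"
  by (simp add: mult_pCons_left coeff_pCons split: nat.splits)

lemma coeff_linear_power_top:
  fixes c d :: real
  shows "coeff ([:d, c:] ^ j) j = c ^ j"
proof (induction j)
  case (Suc j)
  have "coeff ([:d, c:] ^ Suc j) (Suc j) = d * coeff ([:d, c:] ^ j) (Suc j) + c * coeff ([:d, c:] ^ j) j"
    by (simp only: power_Suc coeff_linear_mult) simp
  then show ?case using Suc coeff_linear_power_above[of j "Suc j" d c] by simp
qed simp

lemma coeff_linear_power_subtop: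
  fixes c d :: real
  shows "coeff ([:d, c:] ^ Suc j) j = real (Suc j) * c ^ j * d"
proof (induction j)
  case (Suc j)
  have "coeff ([:d, c:] ^ Suc (Suc j)) (Suc j)
      = d * coeff ([:d, c:] ^ Suc j) (Suc j) + c * coeff ([:d, c:] ^ Suc j) j"
    by (simp only: power_Suc[of _ "Suc j"] coeff_linear_mult) simp
  also have "\<dots> = d * c ^ Suc j + c * (real (Suc j) * c ^ j * d)"
    using Suc coeff_linear_power_top[of d c "Suc j"] by simp
  finally show ?case by (simp add: algebra_simps)
qed simp

lemma coeff_pcompose_linear:
  fixes Q :: "real poly" and c d :: real
  shows "coeff (pcompose Q [:d, c:]) k = (\<Sum>i\<le>degree Q. coeff Q i * coeff ([:d, c:] ^ i) k)"
proof -
  have "pcompose Q [:d, c:] = poly (map_poly (\<lambda>x. [:x:]) Q) [:d, c:]" by (rule pcompose_altdef)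
  also have "\<dots> = (\<Sum>i\<le>degree Q. smult (coeff Q i) ([:d, c:] ^ i))"
    by (simp add: poly_altdef degree_map_poly coeff_map_poly)
  finally show ?thesis by (simp add: coeff_sum)
qed

lemma coeff_pcompose_linear_top:
  fixes Q :: "real poly" and c d :: real
  assumes "degree Q = Suc j"
  shows "coeff (pcompose Q [:d, c:]) (Suc j) = coeff Q (Suc j) * c ^ Suc j"
    and "coeff (pcompose Q [:d, c:]) j = coeff Q j * c ^ j + coeff Q (Suc j) * real (Suc j) * c ^ j * d"
    and "k > Suc j \<Longrightarrow> coeff (pcompose Q [:d, c:]) k = 0"
proof -
  show "coeff (pcompose Q [:d, c:]) (Suc j) = coeff Q (Suc j) * c ^ Suc j"
    unfolding coeff_pcompose_linear assms sum.atMost_Suc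
    by (simp add: coeff_linear_power_top coeff_linear_power_above)
  have "(\<Sum>i<j. coeff Q i * coeff ([:d, c:] ^ i) j) = 0"
    by (intro sum.neutral) (auto simp: coeff_linear_power_above)
  then show "coeff (pcompose Q [:d, c:]) j = coeff Q j * c ^ j + coeff Q (Suc j) * real (Suc j) * c ^ j * d"
    unfolding coeff_pcompose_linear assms sum.atMost_Suc lessThan_Suc_atMost[symmetric] sum.lessThan_Suc
    by (simp only: coeff_linear_power_top coeff_linear_power_subtop add_0_left mult.assoc)
  show "coeff (pcompose Q [:d, c:]) k = 0" if "k > Suc j"
    unfolding coeff_pcompose_linear assms using that
    by (intro sum.neutral) (auto simp: coeff_linear_power_above)
qed

lemma poly_eq_if_agree_on_infinite_nat_set:
  fixes A B :: "real poly"
  assumes "infinite C" and "\<forall>n\<in>C. poly A (real n) = poly B (real n)"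
  shows "A = B"
proof (rule ccontr)
  assume "A \<noteq> B"
  then have "finite {x. poly (A - B) x = 0}" by (intro poly_roots_finite) simp
  moreover have "real ` C \<subseteq> {x. poly (A - B) x = 0}" using assms(2) by auto
  ultimately have "finite (real ` C)" by (rule finite_subset[rotated])
  then show False using assms(1) by (auto dest: finite_imageD simp: inj_on_def)
qed

section \<open>Natural densities\<close>

definition count_upto :: "(nat \<Rightarrow> bool) \<Rightarrow> nat \<Rightarrow> nat" where
  "count_upto F r = card {n \<in> {1..r}. F n}"

definition has_density :: "(nat \<Rightarrow> bool) \<Rightarrow> real \<Rightarrow> bool" where
  "has_density F \<rho> \<longleftrightarrow> (\<lambda>r. real (count_upto F r) / real r) \<longlonglongrightarrow> \<rho>"

lemma LIMSEQ_div_real_if_bounded_diff: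
  fixes a b :: "nat \<Rightarrow> real"
  assumes "eventually (\<lambda>r. \<bar>a r - b r\<bar> \<le> B) sequentially"
    and "(\<lambda>r. b r / real r) \<longlonglongrightarrow> l"
  shows "(\<lambda>r. a r / real r) \<longlonglongrightarrow> l"
proof -
  have "(\<lambda>r. (a r - b r) / real r) \<longlonglongrightarrow> 0"
  proof (rule tendsto_sandwich[of "\<lambda>r. - B / real r" _ _ "\<lambda>r. B / real r"])
    show "\<forall>\<^sub>F r in sequentially. - B / real r \<le> (a r - b r) / real r"
      using assms(1)
    proof eventually_elim
      case (elim r)
      then have "- B \<le> a r - b r" by (simp add: abs_le_iff)
      then show ?case by (rule divide_right_mono) simp
    qed
    show "\<forall>\<^sub>F r in sequentially. (a r - b r) / real r \<le> B / real r"
      using assms(1) by eventually_elim (auto intro: divide_right_mono simp: abs_le_iff)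
  qed (use lim_const_over_n[of "- B"] lim_const_over_n[of B] in auto)
  from tendsto_add[OF assms(2) this] show ?thesis by (simp add: diff_divide_distrib)
qed

lemma count_upto_le: "count_upto F r \<le> r"
proof -
  have "count_upto F r \<le> card {1..r}" unfolding count_upto_def by (intro card_mono) auto
  then show ?thesis by simp
qed

lemma has_density_if_bounded_error:
  assumes "\<forall>r. \<bar>real (count_upto F r) - \<rho> * real r\<bar> \<le> C"
  shows "has_density F \<rho>"
  unfolding has_density_def
proof (rule LIMSEQ_div_real_if_bounded_diff)
  show "\<forall>\<^sub>F r in sequentially. \<bar>real (count_upto F r) - \<rho> * real r\<bar> \<le> C"
    using assms by simp
  have "\<forall>\<^sub>F r in sequentially. \<rho> = \<rho> * real r / real r"
    by (rule eventually_sequentiallyI[of 1]) simp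
  then show "(\<lambda>r. \<rho> * real r / real r) \<longlonglongrightarrow> \<rho>"
    by (rule Lim_transform_eventually[OF tendsto_const])
qed

lemma count_upto_le_if_eventually_imp:
  assumes "\<forall>n\<ge>N. F n \<longrightarrow> G n"
  shows "count_upto F r \<le> count_upto G r + N"
proof -
  have "{n \<in> {1..r}. F n} \<subseteq> {n \<in> {1..r}. G n} \<union> {..<N}" using assms by auto
  then have "count_upto F r \<le> card ({n \<in> {1..r}. G n} \<union> {..<N})"
    unfolding count_upto_def by (intro card_mono) auto
  also have "\<dots> \<le> count_upto G r + card {..<N}" unfolding count_upto_def by (rule card_Un_le)
  finally show ?thesis by simp
qed

lemma has_density_eventually_cong:
  assumes "\<forall>n\<ge>N. F n \<longleftrightarrow> G n" and "has_density G \<rho>"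
  shows "has_density F \<rho>"
proof -
  have "count_upto F r \<le> count_upto G r + N" "count_upto G r \<le> count_upto F r + N" for r
    using assms(1) by (intro count_upto_le_if_eventually_imp; blast)+
  then have "\<forall>\<^sub>F r in sequentially. \<bar>real (count_upto F r) - real (count_upto G r)\<bar> \<le> real N"
    by (intro always_eventually allI) (smt (verit) of_nat_add of_nat_mono)
  then show ?thesis using assms(2) unfolding has_density_def by (rule LIMSEQ_div_real_if_bounded_diff)
qed

lemma has_density_zero_mono:
  assumes "\<forall>n. F n \<longrightarrow> G n" and "has_density G 0"
  shows "has_density F 0"
  unfolding has_density_def
proof (rule tendsto_sandwich[of "\<lambda>r. 0" _ _ "\<lambda>r. real (count_upto G r) / real r"])
  have "count_upto F r \<le> count_upto G r" for r
    unfolding count_upto_def using assms(1) by (intro card_mono) auto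
  then show "\<forall>\<^sub>F r in sequentially. real (count_upto F r) / real r \<le> real (count_upto G r) / real r"
    by (intro always_eventually allI divide_right_mono) auto
  show "(\<lambda>r. real (count_upto G r) / real r) \<longlonglongrightarrow> 0"
    using assms(2) unfolding has_density_def .
qed auto

lemma has_density_zero_if_finite:
  assumes "finite {n. F n}"
  shows "has_density F 0"
proof (rule has_density_if_bounded_error[of _ _ "real (card {n. F n})"], intro allI)
  fix r
  have "count_upto F r \<le> card {n. F n}" unfolding count_upto_def using assms by (intro card_mono) auto
  then show "\<bar>real (count_upto F r) - 0 * real r\<bar> \<le> real (card {n. F n})" by simp
qed

definition sparse :: "(nat \<Rightarrow> bool) \<Rightarrow> nat \<Rightarrow> nat \<Rightarrow> bool" where
  "sparse F H N \<longleftrightarrow> (\<forall>a b. N \<le> a \<longrightarrow> a < b \<longrightarrow> b \<le> a + H \<longrightarrow> F a \<longrightarrow> \<not> F b)"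

lemma count_upto_le_if_sparse:
  assumes H: "H \<ge> 1" and sp: "sparse F H N"
  shows "count_upto F r \<le> N + (r div H + 1)"
proof -
  define B where "B = {n \<in> {1..r}. F n \<and> n \<ge> N}"
  have "count_upto F r \<le> card ({..<N} \<union> B)" unfolding count_upto_def B_def by (intro card_mono) auto
  also have "\<dots> \<le> N + card B" using card_Un_le[of "{..<N}" B] by simp
  also have "card B \<le> r div H + 1"
  proof -
    have far: "a + H < b" if "a \<in> B" "b \<in> B" "a < b" for a b
    proof (rule ccontr)
      assume "\<not> a + H < b"
      then show False using sp that unfolding sparse_def B_def by auto
    qed
    have "inj_on (\<lambda>n. n div H) B"
    proof (rule inj_onI, rule ccontr)
      fix a b assume ab: "a \<in> B" "b \<in> B" "a div H = b div H" "a \<noteq> b"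
      have "(x + H) div H \<le> y div H" if "x \<in> B" "y \<in> B" "x < y" for x y
        using far[OF that] by (intro div_le_mono) simp
      moreover have "(x + H) div H = x div H + 1" for x using H by simp
      ultimately have "\<not> a < b" "\<not> b < a" using ab by fastforce+
      then show False using ab(4) by simp
    qed
    moreover have "(\<lambda>n. n div H) ` B \<subseteq> {..r div H}" unfolding B_def by (auto intro: div_le_mono)
    then have "card ((\<lambda>n. n div H) ` B) \<le> card {..r div H}" by (intro card_mono) auto
    ultimately show ?thesis by (simp add: card_image)
  qed
  finally show ?thesis by simp
qed

lemma has_density_zero_if_sparse:
  assumes "\<forall>H\<ge>1. \<exists>N. sparse F H N"
  shows "has_density F 0"
  unfolding has_density_def
proof (rule LIMSEQ_I)
  fix \<epsilon> :: real assume e: "\<epsilon> > 0"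
  define H where "H = nat \<lceil>2 / \<epsilon>\<rceil> + 1"
  have H1: "H \<ge> 1" unfolding H_def by simp
  have "real H > 2 / \<epsilon>" unfolding H_def by linarith
  then have Hb: "1 / real H < \<epsilon> / 2" using e H1 by (simp add: field_simps)
  obtain N where N: "sparse F H N" using assms H1 by blast
  show "\<exists>r0. \<forall>r\<ge>r0. norm (real (count_upto F r) / real r - 0) < \<epsilon>"
  proof (intro exI allI impI)
    fix r assume r: "r \<ge> nat \<lceil>2 * (real N + 1) / \<epsilon>\<rceil> + 1"
    have rpos: "real r > 0" and rb: "real r > 2 * (real N + 1) / \<epsilon>" using r by linarith+
    have "real (count_upto F r) \<le> real N + 1 + real (r div H)"
      using count_upto_le_if_sparse[OF H1 N, of r] by linarith
    also have "real (r div H) \<le> real r / real H" by (rule of_nat_div_le_of_nat)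
    finally have "real (count_upto F r) / real r \<le> (real N + 1) / real r + 1 / real H"
      using rpos by (simp add: field_simps)
    also have "(real N + 1) / real r < \<epsilon> / 2" using rb rpos e by (simp add: field_simps)
    finally show "norm (real (count_upto F r) / real r - 0) < \<epsilon>" using Hb by simp
  qed
qed

lemma periodic_nat_mod:
  assumes "\<forall>n. F (n + L) = F (n::nat)"
  shows "F (n mod L) = F n"
proof -
  have "F (s + j * L) = F s" for s j
  proof (induction j)
    case (Suc j)
    have "s + Suc j * L = (s + j * L) + L" by simp
    then show ?case using Suc assms by metis
  qed simp
  from this[of "n mod L" "n div L"] show ?thesis by simp
qed

lemma count_upto_add_period:
  assumes per: "\<forall>n. F (n + L) = F (n::nat)"
  shows "count_upto F (r + L) = count_upto F L + count_upto F r"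
proof -
  have "{n \<in> {1..r + L}. F n} = {n \<in> {1..L}. F n} \<union> (\<lambda>n. n + L) ` {n \<in> {1..r}. F n}"
  proof (intro equalityI subsetI)
    fix n assume n: "n \<in> {n \<in> {1..r + L}. F n}"
    show "n \<in> {n \<in> {1..L}. F n} \<union> (\<lambda>n. n + L) ` {n \<in> {1..r}. F n}"
    proof (cases "n \<le> L")
      case False
      then have "n = (n - L) + L" "F (n - L)" using n per[rule_format, of "n - L"] by auto
      then show ?thesis using n False by (auto intro!: image_eqI[of _ _ "n - L"])
    qed (use n in auto)
  qed (use per in auto)
  moreover have "card ((\<lambda>n. n + L) ` {n \<in> {1..r}. F n}) = count_upto F r"
    unfolding count_upto_def by (intro card_image) (auto simp: inj_on_def)
  moreover have "card ({n \<in> {1..L}. F n} \<union> (\<lambda>n. n + L) ` {n \<in> {1..r}. F n})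
      = card {n \<in> {1..L}. F n} + card ((\<lambda>n. n + L) ` {n \<in> {1..r}. F n})"
    by (rule card_Un_disjoint) auto
  ultimately show ?thesis unfolding count_upto_def by simp
qed

lemma count_upto_period:
  assumes L: "L > 0" and per: "\<forall>n. F (n + L) = F (n::nat)"
  shows "count_upto F L = card {n. n < L \<and> F n}"
proof -
  have "bij_betw (\<lambda>n. n mod L) {n \<in> {1..L}. F n} {n. n < L \<and> F n}"
  proof (rule bij_betw_imageI)
    show "inj_on (\<lambda>n. n mod L) {n \<in> {1..L}. F n}"
    proof (rule inj_onI)
      fix a b assume "a \<in> {n \<in> {1..L}. F n}" "b \<in> {n \<in> {1..L}. F n}" "a mod L = b mod L"
      then show "a = b" by (cases "a = L"; cases "b = L") auto
    qed
    show "(\<lambda>n. n mod L) ` {n \<in> {1..L}. F n} = {n. n < L \<and> F n}"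
    proof (intro equalityI subsetI)
      fix n assume n: "n \<in> {n. n < L \<and> F n}"
      show "n \<in> (\<lambda>n. n mod L) ` {n \<in> {1..L}. F n}"
      proof (cases "n = 0")
        case True
        then have "F L" using n per[rule_format, of 0] by simp
        then show ?thesis using True L by (auto intro!: image_eqI[of _ _ L])
      qed (use n in \<open>auto intro!: image_eqI[of _ _ n]\<close>)
    qed (use L periodic_nat_mod[OF per] in auto)
  qed
  then show ?thesis unfolding count_upto_def by (rule bij_betw_same_card)
qed

lemma count_upto_periodic:
  assumes L: "L > 0" and per: "\<forall>n. F (n + L) = F (n::nat)"
  shows "count_upto F (j * L + s) = j * card {n. n < L \<and> F n} + count_upto F s"
proof (induction j)
  case (Suc j)
  have "Suc j * L + s = (j * L + s) + L" by simp
  then show ?case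
    using Suc count_upto_add_period[OF per, of "j * L + s"] count_upto_period[OF L per]
    by (simp only:) simp
qed simp

lemma has_density_periodic:
  assumes L: "L > 0" and per: "\<forall>n. F (n + L) = F (n::nat)"
  shows "has_density F (real (card {n. n < L \<and> F n}) / real L)"
proof (rule has_density_if_bounded_error[of _ _ "real L"], intro allI)
  fix r
  define \<kappa> where "\<kappa> = card {n. n < L \<and> F n}"
  have \<kappa>L: "\<kappa> \<le> L" unfolding \<kappa>_def using card_mono[of "{..<L}" "{n. n < L \<and> F n}"] by auto
  have r: "r = (r div L) * L + r mod L" by simp
  have count: "count_upto F r = (r div L) * \<kappa> + count_upto F (r mod L)"
    unfolding \<kappa>_def by (subst r, rule count_upto_periodic[OF L per])
  have rem: "count_upto F (r mod L) \<le> L"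
    using count_upto_le[of F "r mod L"] L by (meson mod_le_divisor order_trans)
  have "real r = real (r div L) * real L + real (r mod L)"
    by (metis of_nat_add of_nat_mult r)
  then have split: "real \<kappa> / real L * real r = real (r div L) * real \<kappa> + real \<kappa> * real (r mod L) / real L"
    using L by (simp add: field_simps)
  have "real \<kappa> * real (r mod L) \<le> real L * real L"
    using \<kappa>L L by (intro mult_mono) auto
  then have "real \<kappa> * real (r mod L) / real L \<le> real L" using L by (simp add: field_simps)
  moreover have "real \<kappa> * real (r mod L) / real L \<ge> 0" by simp
  moreover have "real (count_upto F r) = real (r div L) * real \<kappa> + real (count_upto F (r mod L))"
    using count by simp
  moreover have "real (count_upto F (r mod L)) \<le> real L" using rem by simp
  ultimately show "\<bar>real (count_upto F r) - real \<kappa> / real L * real r\<bar> \<le> real L"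
    unfolding split \<kappa>_def[symmetric] abs_le_iff by (smt (verit) of_nat_0_le_iff)
qed

lemma has_density_rescaled:
  assumes dens: "has_density D \<rho>" and c: "c > 0"
    and Y: "\<forall>\<^sub>F r in sequentially. \<bar>real (Y r) - c * real r\<bar> \<le> B"
  shows "(\<lambda>r. real (count_upto D (Y r)) / real r) \<longlonglongrightarrow> c * \<rho>"
proof -
  have grows: "\<forall>\<^sub>F r in sequentially. real M + 1 \<le> real (Y r)" for M :: nat
  proof -
    have "\<forall>\<^sub>F r in sequentially. real M + 1 + B \<le> c * real r"
      using c by (intro eventually_sequentiallyI[of "nat \<lceil>(real M + 1 + \<bar>B\<bar>) / c\<rceil>"])
        (auto simp: field_simps dest!: of_nat_mono[where 'a=real] intro: order_trans[rotated])
    with Y show ?thesis by eventually_elim linarith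
  qed
  have big: "\<forall>\<^sub>F r in sequentially. M < Y r" for M
    using grows[of M] by eventually_elim linarith
  have "filterlim Y at_top sequentially"
  proof (subst filterlim_at_top, intro allI)
    fix M show "\<forall>\<^sub>F r in sequentially. M \<le> Y r" using big[of M] by eventually_elim simp
  qed
  from filterlim_compose[OF dens[unfolded has_density_def] this]
  have "(\<lambda>r. real (count_upto D (Y r)) / real (Y r)) \<longlonglongrightarrow> \<rho>" by (simp add: o_def)
  moreover have "(\<lambda>r. real (Y r) / real r) \<longlonglongrightarrow> c"
  proof (rule LIMSEQ_div_real_if_bounded_diff[OF Y])
    have "\<forall>\<^sub>F r in sequentially. c = c * real r / real r"
      by (rule eventually_sequentiallyI[of 1]) simp
    then show "(\<lambda>r. c * real r / real r) \<longlonglongrightarrow> c" by (rule Lim_transform_eventually[OF tendsto_const])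
  qed
  ultimately have "(\<lambda>r. real (count_upto D (Y r)) / real (Y r) * (real (Y r) / real r)) \<longlonglongrightarrow> \<rho> * c"
    by (rule tendsto_mult)
  moreover have "\<forall>\<^sub>F r in sequentially.
      real (count_upto D (Y r)) / real (Y r) * (real (Y r) / real r) = real (count_upto D (Y r)) / real r"
    using big[of 0] by eventually_elim simp
  ultimately show ?thesis by (simp add: Lim_transform_eventually mult.commute)
qed

section \<open>Counting preimages\<close>

lemma finite_card_le_if_inj_image_subset:
  assumes "inj_on f A" and "f ` A \<subseteq> g ` B" and "finite B"
  shows "finite A" and "card A \<le> card B"
proof -
  have "finite (f ` A)" using assms(2,3) finite_subset by blast
  then show "finite A" using assms(1) by (rule finite_imageD)
  have "card A = card (f ` A)" using assms(1) by (rule card_image[symmetric])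
  also have "\<dots> \<le> card (g ` B)" using assms(2,3) by (intro card_mono) auto
  also have "\<dots> \<le> card B" using assms(3) by (rule card_image_le)
  finally show "card A \<le> card B" .
qed

lemma preimages_finite_and_card_le:
  fixes f :: "real \<Rightarrow> real" and g :: "nat \<Rightarrow> real" and D :: "nat \<Rightarrow> bool"
  assumes mono: "strict_mono_on {R..} f" and cut: "\<forall>n\<ge>N. g n \<le> f r \<longrightarrow> n \<le> Y"
  defines "X \<equiv> {x. R \<le> x \<and> (\<exists>n\<ge>1. D n \<and> f x = g n)} \<inter> {1..r}"
  shows "finite X" and "card X \<le> N + count_upto D Y"
proof -
  define Xs where "Xs = {x \<in> X. \<exists>n<N. f x = g n}"
  define Xb where "Xb = {x \<in> X. \<exists>n. N \<le> n \<and> 1 \<le> n \<and> D n \<and> f x = g n}"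
  define DY where "DY = {n \<in> {1..Y}. D n}"
  have inj: "inj_on f X" using strict_mono_on_imp_inj_on[OF mono] unfolding X_def
    by (rule inj_on_subset) auto
  have "X \<subseteq> Xs \<union> Xb"
  proof
    fix x assume x: "x \<in> X"
    then obtain n where n: "n \<ge> 1" "D n" "f x = g n" unfolding X_def by auto
    show "x \<in> Xs \<union> Xb"
    proof (cases "n < N")
      case True then show ?thesis using x n unfolding Xs_def by auto
    next
      case False
      then have "N \<le> n" by simp
      then have "x \<in> Xb" unfolding Xb_def using x n by blast
      then show ?thesis by simp
    qed
  qed
  have "f ` Xs \<subseteq> g ` {..<N}" unfolding Xs_def by auto
  moreover have "inj_on f Xs" using inj unfolding Xs_def by (rule inj_on_subset) auto
  ultimately have Xs: "finite Xs" "card Xs \<le> N"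
    using finite_card_le_if_inj_image_subset[of f Xs g "{..<N}"] by auto
  have "f ` Xb \<subseteq> g ` DY"
  proof
    fix v assume "v \<in> f ` Xb"
    then obtain x n where x: "x \<in> X" "N \<le> n" "1 \<le> n" "D n" "f x = g n" "v = f x"
      unfolding Xb_def by auto
    then have "f x \<le> f r" using strict_mono_on_leD[OF mono, of x r] unfolding X_def by auto
    then have "n \<le> Y" using cut x by auto
    then show "v \<in> g ` DY" unfolding DY_def using x by auto
  qed
  moreover have "inj_on f Xb" using inj unfolding Xb_def by (rule inj_on_subset) auto
  moreover have "finite DY" unfolding DY_def by simp
  ultimately have Xb: "finite Xb" "card Xb \<le> count_upto D Y"
    using finite_card_le_if_inj_image_subset[of f Xb g DY] unfolding count_upto_def DY_def by auto
  show "finite X" using \<open>X \<subseteq> Xs \<union> Xb\<close> Xs Xb by (meson finite_UnI finite_subset)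
  have "card X \<le> card Xs + card Xb"
    using \<open>X \<subseteq> Xs \<union> Xb\<close> Xs Xb by (meson card_Un_le card_mono finite_UnI order_trans)
  then show "card X \<le> N + count_upto D Y" using Xs Xb by linarith
qed

lemma count_upto_le_card_preimages:
  fixes f :: "real \<Rightarrow> real" and g :: "nat \<Rightarrow> real"
  assumes cont: "\<forall>x. isCont f x"
    and R': "R \<le> R'" "1 \<le> R'" "R' \<le> r"
    and inj: "inj_on g {N..}" and large: "\<forall>n\<ge>N. f R' \<le> g n"
    and cut: "\<forall>n\<ge>N. n \<le> Y \<longrightarrow> g n \<le> f r"
    and fin: "finite ({x. R \<le> x \<and> (\<exists>n\<ge>1. D n \<and> f x = g n)} \<inter> {1..r})"
  shows "count_upto D Y \<le> N + card ({x. R \<le> x \<and> (\<exists>n\<ge>1. D n \<and> f x = g n)} \<inter> {1..r})"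
proof -
  define X where "X = {x. R \<le> x \<and> (\<exists>n\<ge>1. D n \<and> f x = g n)} \<inter> {1..r}"
  define B where "B = {n \<in> {1..Y}. D n \<and> N \<le> n}"
  have "g ` B \<subseteq> f ` X"
  proof
    fix v assume "v \<in> g ` B"
    then obtain n where n: "n \<in> {1..Y}" "D n" "N \<le> n" "v = g n" unfolding B_def by auto
    then have "f R' \<le> g n" "g n \<le> f r" using large cut by auto
    then obtain x where "R' \<le> x" "x \<le> r" "f x = g n"
      using IVT[of f R' "g n" r] R' cont by auto
    then show "v \<in> f ` X" unfolding X_def using R' n by (intro image_eqI[of _ _ x]) auto
  qed
  have "card B = card (g ` B)" unfolding B_def
    by (intro card_image[symmetric] inj_on_subset[OF inj]) auto
  also have "\<dots> \<le> card (f ` X)" using fin \<open>g ` B \<subseteq> f ` X\<close> unfolding X_def by (intro card_mono) auto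
  also have "\<dots> \<le> card X" using fin unfolding X_def by (rule card_image_le)
  finally have "card B \<le> card X" .
  moreover have "count_upto D Y \<le> card ({..<N} \<union> B)"
    unfolding count_upto_def B_def by (intro card_mono) auto
  moreover have "card ({..<N} \<union> B) \<le> N + card B" using card_Un_le[of "{..<N}" B] by simp
  ultimately show ?thesis unfolding X_def by linarith
qed

section \<open>Simultaneous lattice conditions and the Chinese remainder theorem\<close>

lemma int_congruences2_solvable:
  fixes a b m1 m2 :: int
  assumes "gcd m1 m2 dvd (a - b)"
  shows "\<exists>N. m1 dvd (N - a) \<and> m2 dvd (N - b)"
proof -
  obtain u v where uv: "u * m1 + v * m2 = gcd m1 m2" using bezout_int by blast
  obtain t where t: "a - b = gcd m1 m2 * t" using assms by (auto elim: dvdE)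
  have "a - u * m1 * t - b = (u * m1 + v * m2) * t - u * m1 * t" using uv t by simp
  also have "\<dots> = v * m2 * t" by (simp add: algebra_simps)
  finally show ?thesis by (intro exI[of _ "a - u * m1 * t"]) simp
qed

lemma gcd_Lcm_dvd_if_gcds_dvd:
  fixes f :: "'a \<Rightarrow> int"
  assumes "finite S" and "\<forall>i\<in>S. gcd x (f i) dvd y"
  shows "gcd x (Lcm (f ` S)) dvd y"
  using assms by (induction S rule: finite_induct) (simp_all add: gcd_lcm_distrib)

lemma int_congruences_solvable:
  fixes \<alpha> w :: "'a \<Rightarrow> int"
  assumes "finite S" and "\<forall>i\<in>S. \<forall>j\<in>S. gcd (\<alpha> i) (\<alpha> j) dvd (w i - w j)"
  shows "\<exists>N. \<forall>i\<in>S. \<alpha> i dvd (N - w i)"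
  using assms
proof (induction S rule: finite_induct)
  case (insert a S)
  then obtain N0 where N0: "\<forall>i\<in>S. \<alpha> i dvd (N0 - w i)" by auto
  have "gcd (\<alpha> a) (Lcm (\<alpha> ` S)) dvd (N0 - w a)"
  proof (rule gcd_Lcm_dvd_if_gcds_dvd[OF insert(1)], intro ballI)
    fix i assume i: "i \<in> S"
    have "gcd (\<alpha> a) (\<alpha> i) dvd (N0 - w i)"
      using N0 i by (meson dvd_trans gcd_dvd2)
    moreover have "gcd (\<alpha> a) (\<alpha> i) dvd (w i - w a)"
      using insert(4) i by (metis dvd_diff_commute gcd.commute insert_iff)
    ultimately have "gcd (\<alpha> a) (\<alpha> i) dvd ((N0 - w i) + (w i - w a))" by (rule dvd_add)
    then show "gcd (\<alpha> a) (\<alpha> i) dvd (N0 - w a)" by simp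
  qed
  then obtain N where N: "Lcm (\<alpha> ` S) dvd (N - N0)" "\<alpha> a dvd (N - w a)"
    using int_congruences2_solvable[of "Lcm (\<alpha> ` S)" "\<alpha> a" N0 "w a"] by (auto simp: gcd.commute)
  have "\<alpha> i dvd (N - w i)" if "i \<in> S" for i
  proof -
    have "\<alpha> i dvd (N - N0)" using N(1) that by (meson dvd_Lcm image_eqI dvd_trans)
    moreover have "\<alpha> i dvd (N0 - w i)" using N0 that by auto
    ultimately have "\<alpha> i dvd ((N - N0) + (N0 - w i))" by (rule dvd_add)
    then show ?thesis by simp
  qed
  then show ?case using N(2) by auto
qed simp

definition on_lattice :: "nat \<Rightarrow> nat \<Rightarrow> real \<Rightarrow> nat \<Rightarrow> bool" where
  "on_lattice a b x n \<longleftrightarrow> (\<exists>z::int. real n = real a / real b * (real_of_int z - x))"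

lemma on_lattice_add_mult:
  assumes "b > 0"
  shows "on_lattice a b x (n + a * k) \<longleftrightarrow> on_lattice a b x n"
proof
  assume "on_lattice a b x (n + a * k)"
  then obtain z where "real (n + a * k) = real a / real b * (real_of_int z - x)"
    unfolding on_lattice_def by blast
  then have "real n = real a / real b * (real_of_int (z - int b * int k) - x)"
    using assms by (simp add: field_simps)
  then show "on_lattice a b x n" unfolding on_lattice_def by blast
next
  assume "on_lattice a b x n"
  then obtain z where "real n = real a / real b * (real_of_int z - x)"
    unfolding on_lattice_def by blast
  then have "real (n + a * k) = real a / real b * (real_of_int (z + int b * int k) - x)"
    using assms by (simp add: field_simps)
  then show "on_lattice a b x (n + a * k)" unfolding on_lattice_def by blast
qed

lemma on_lattice_mod:
  assumes "b > 0"
  shows "on_lattice a b x (n mod a) \<longleftrightarrow> on_lattice a b x n"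
  using on_lattice_add_mult[OF assms, of a x "n mod a" "n div a"] by simp

definition compatible_residues :: "nat set \<Rightarrow> (nat \<Rightarrow> nat) \<Rightarrow> (nat \<Rightarrow> nat) \<Rightarrow> (nat \<Rightarrow> real) \<Rightarrow> (nat \<Rightarrow> int) set"
  where "compatible_residues S \<alpha> \<beta> x = {w \<in> PiE S (\<lambda>i. Wset (\<alpha> i) (\<beta> i) (x i)).
           \<forall>i\<in>S. \<forall>j\<in>S. w i - w j \<in> diffset (\<alpha> j) (\<alpha> i)}"

lemma compatible_residues_empty: "card (compatible_residues {} \<alpha> \<beta> x) = 1"
  unfolding compatible_residues_def by simp

definition residue_tuple :: "nat set \<Rightarrow> (nat \<Rightarrow> nat) \<Rightarrow> nat \<Rightarrow> nat \<Rightarrow> int" where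
  "residue_tuple S \<alpha> n = restrict (\<lambda>i. int (n mod \<alpha> i)) S"

lemma Lcm_pos_if_pos:
  fixes \<alpha> :: "'a \<Rightarrow> nat"
  assumes "finite S" and "\<forall>i\<in>S. \<alpha> i > 0"
  shows "Lcm (\<alpha> ` S) > 0"
  using assms by (subst neq0_conv[symmetric], subst Lcm_0_iff) auto

lemma Lcm_image_int: "Lcm ((\<lambda>i. int (\<alpha> i)) ` S) = int (Lcm (\<alpha> ` S))"
  by (metis Lcm_int_eq image_image)

lemma residue_tuple_inj_on:
  shows "inj_on (residue_tuple S \<alpha>) {..<Lcm (\<alpha> ` S)}"
proof (rule inj_onI)
  fix a b assume a: "a \<in> {..<Lcm (\<alpha> ` S)}" and b: "b \<in> {..<Lcm (\<alpha> ` S)}"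
    and eq: "residue_tuple S \<alpha> a = residue_tuple S \<alpha> b"
  have "int (\<alpha> i) dvd (int a - int b)" if i: "i \<in> S" for i
  proof -
    have "a mod \<alpha> i = b mod \<alpha> i" using fun_cong[OF eq, of i] i unfolding residue_tuple_def by simp
    then have "int a mod int (\<alpha> i) = int b mod int (\<alpha> i)" by (metis of_nat_mod)
    then show ?thesis by (simp add: mod_eq_dvd_iff)
  qed
  then have "Lcm ((\<lambda>i. int (\<alpha> i)) ` S) dvd (int a - int b)" by (auto intro: Lcm_least)
  then have d: "int (Lcm (\<alpha> ` S)) dvd (int a - int b)" by (metis Lcm_int_eq image_image)
  show "a = b"
  proof (rule ccontr)
    assume "a \<noteq> b"
    then have "\<bar>int (Lcm (\<alpha> ` S))\<bar> \<le> \<bar>int a - int b\<bar>" using d by (intro dvd_imp_le_int) auto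
    then show False using a b by auto
  qed
qed

lemma residue_tuple_in_compatible_residues:
  assumes ab: "\<forall>i\<in>S. \<alpha> i > 0 \<and> \<beta> i > 0" and n: "\<forall>i\<in>S. on_lattice (\<alpha> i) (\<beta> i) (x i) n"
  shows "residue_tuple S \<alpha> n \<in> compatible_residues S \<alpha> \<beta> x"
proof -
  have "residue_tuple S \<alpha> n \<in> PiE S (\<lambda>i. Wset (\<alpha> i) (\<beta> i) (x i))"
    unfolding residue_tuple_def restrict_PiE_iff
  proof (intro ballI)
    fix i assume i: "i \<in> S"
    have "on_lattice (\<alpha> i) (\<beta> i) (x i) (n mod \<alpha> i)" using n i ab on_lattice_mod by blast
    then show "int (n mod \<alpha> i) \<in> Wset (\<alpha> i) (\<beta> i) (x i)"
      unfolding on_lattice_def Wset_def using i ab by auto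
  qed
  moreover have "int (n mod \<alpha> i) - int (n mod \<alpha> j) \<in> diffset (\<alpha> j) (\<alpha> i)" if "i \<in> S" "j \<in> S" for i j
  proof -
    define s where "s = n div \<alpha> j + \<alpha> i"
    define t where "t = n div \<alpha> i + \<alpha> j"
    have "int n = int (\<alpha> i) * int (n div \<alpha> i) + int (n mod \<alpha> i)"
      "int n = int (\<alpha> j) * int (n div \<alpha> j) + int (n mod \<alpha> j)"
      by (metis div_mult_mod_eq of_nat_add of_nat_mult mult.commute)+
    then have "int (n mod \<alpha> i) - int (n mod \<alpha> j) = int (\<alpha> j) * int s - int (\<alpha> i) * int t"
      unfolding s_def t_def by (simp add: algebra_simps)
    moreover have "s \<ge> 1" "t \<ge> 1" unfolding s_def t_def using ab that by auto
    ultimately show ?thesis unfolding diffset_def by auto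
  qed
  ultimately show ?thesis unfolding compatible_residues_def residue_tuple_def by auto
qed

lemma compatible_residues_realized:
  assumes S: "finite S" and ab: "\<forall>i\<in>S. \<alpha> i > 0 \<and> \<beta> i > 0"
    and w: "w \<in> compatible_residues S \<alpha> \<beta> x"
  shows "\<exists>n < Lcm (\<alpha> ` S). (\<forall>i\<in>S. on_lattice (\<alpha> i) (\<beta> i) (x i) n) \<and> residue_tuple S \<alpha> n = w"
proof -
  define L where "L = Lcm (\<alpha> ` S)"
  have L0: "L > 0" unfolding L_def using Lcm_pos_if_pos[OF S] ab by auto
  have wP: "w \<in> PiE S (\<lambda>i. Wset (\<alpha> i) (\<beta> i) (x i))"
    and wc: "\<forall>i\<in>S. \<forall>j\<in>S. w i - w j \<in> diffset (\<alpha> j) (\<alpha> i)"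
    using w unfolding compatible_residues_def by auto
  have "gcd (int (\<alpha> i)) (int (\<alpha> j)) dvd (w i - w j)" if ij: "i \<in> S" "j \<in> S" for i j
  proof -
    obtain s t :: nat where "w i - w j = int (\<alpha> j) * int s - int (\<alpha> i) * int t"
      using wc ij unfolding diffset_def by blast
    then show ?thesis by simp
  qed
  then obtain N0 where N0: "\<forall>i\<in>S. int (\<alpha> i) dvd (N0 - w i)"
    using int_congruences_solvable[OF S, of "\<lambda>i. int (\<alpha> i)" w] by blast
  define n where "n = nat (N0 mod int L)"
  have n0: "int n = N0 mod int L" unfolding n_def using L0 by simp
  have nL: "n < L" using L0 n0 by (metis of_nat_0_less_iff of_nat_less_iff pos_mod_bound)
  have wi: "w i \<in> Wset (\<alpha> i) (\<beta> i) (x i)" if "i \<in> S" for i using wP that by (auto simp: PiE_iff)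
  have wmod: "int (n mod \<alpha> i) = w i" if i: "i \<in> S" for i
  proof -
    have w0: "0 \<le> w i" "w i < int (\<alpha> i)" using wi[OF i] unfolding Wset_def by auto
    have "int (\<alpha> i) dvd int L" using i unfolding L_def by simp
    then have "int (\<alpha> i) dvd (int n - N0)" unfolding n0
      by (metis dvd_minus_iff minus_diff_eq mod_mod_cancel mod_eq_dvd_iff mod_mod_trivial)
    then have "int (\<alpha> i) dvd ((int n - N0) + (N0 - w i))" using N0 i by (intro dvd_add) auto
    then have "int n mod int (\<alpha> i) = w i mod int (\<alpha> i)" by (simp add: mod_eq_dvd_iff)
    then show ?thesis using w0 by (metis of_nat_mod mod_pos_pos_trivial)
  qed
  have "residue_tuple S \<alpha> n = w"
    using wmod wP unfolding residue_tuple_def by (auto simp: PiE_iff extensional_def)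
  moreover have "on_lattice (\<alpha> i) (\<beta> i) (x i) n" if i: "i \<in> S" for i
  proof -
    obtain z :: int where "real_of_int (w i) = real (\<alpha> i) / real (\<beta> i) * (real_of_int z - x i)"
      using wi[OF i] unfolding Wset_def by auto
    then have "real (n mod \<alpha> i) = real (\<alpha> i) / real (\<beta> i) * (real_of_int z - x i)"
      using wmod[OF i] by (metis of_int_of_nat_eq)
    then show ?thesis using on_lattice_mod ab i unfolding on_lattice_def by blast
  qed
  ultimately show ?thesis using nL unfolding L_def by blast
qed

lemma card_on_lattice_eq_card_compatible_residues:
  assumes S: "finite S" and ab: "\<forall>i\<in>S. \<alpha> i > 0 \<and> \<beta> i > 0"
  shows "card {n. n < Lcm (\<alpha> ` S) \<and> (\<forall>i\<in>S. on_lattice (\<alpha> i) (\<beta> i) (x i) n)}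
       = card (compatible_residues S \<alpha> \<beta> x)"
proof (rule bij_betw_same_card[of "residue_tuple S \<alpha>"], rule bij_betw_imageI)
  show "inj_on (residue_tuple S \<alpha>) {n. n < Lcm (\<alpha> ` S) \<and> (\<forall>i\<in>S. on_lattice (\<alpha> i) (\<beta> i) (x i) n)}"
    using residue_tuple_inj_on by (rule inj_on_subset) auto
  show "residue_tuple S \<alpha> ` {n. n < Lcm (\<alpha> ` S) \<and> (\<forall>i\<in>S. on_lattice (\<alpha> i) (\<beta> i) (x i) n)}
      = compatible_residues S \<alpha> \<beta> x"
    using residue_tuple_in_compatible_residues[OF ab] compatible_residues_realized[OF S ab]
    by (auto simp: image_iff) blast
qed

lemma has_density_on_lattices:
  assumes S: "finite S" and ab: "\<forall>i\<in>S. \<alpha> i > 0 \<and> \<beta> i > 0"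
    and ev: "\<forall>n\<ge>N. F n \<longleftrightarrow> (\<forall>i\<in>S. on_lattice (\<alpha> i) (\<beta> i) (x i) n)"
  shows "has_density F (real (card (compatible_residues S \<alpha> \<beta> x)) / real (Lcm (\<alpha> ` S)))"
proof -
  define L where "L = Lcm (\<alpha> ` S)"
  have L0: "L > 0" unfolding L_def using Lcm_pos_if_pos[OF S] ab by auto
  define G where "G = (\<lambda>n. \<forall>i\<in>S. on_lattice (\<alpha> i) (\<beta> i) (x i) n)"
  have "on_lattice (\<alpha> i) (\<beta> i) (x i) (n + L) = on_lattice (\<alpha> i) (\<beta> i) (x i) n" if "i \<in> S" for i n
  proof -
    have "\<alpha> i dvd L" using that unfolding L_def by simp
    then obtain k where "L = \<alpha> i * k" by (rule dvdE)
    then show ?thesis using on_lattice_add_mult ab that by auto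
  qed
  then have "\<forall>n. G (n + L) = G n" unfolding G_def by auto
  from has_density_periodic[OF L0 this] show ?thesis
    using has_density_eventually_cong[of N F G] ev
      card_on_lattice_eq_card_compatible_residues[OF S ab, of x]
    unfolding G_def L_def by auto
qed

lemma card_compatible_residues_le:
  assumes "finite S" and "\<forall>i\<in>S. \<alpha> i > 0 \<and> \<beta> i > 0"
  shows "card (compatible_residues S \<alpha> \<beta> x) \<le> Lcm (\<alpha> ` S)"
  using card_mono[of "{..<Lcm (\<alpha> ` S)}"] card_on_lattice_eq_card_compatible_residues[OF assms, of x]
  by (metis (no_types, lifting) card_lessThan finite_lessThan lessThan_iff mem_Collect_eq subsetI)

section \<open>Integer points near a line\<close>

lemma dist_Ints_ge_frac:
  fixes x :: real and z :: int
  shows "\<bar>x - real_of_int z\<bar> \<ge> min (frac x) (1 - frac x)"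
proof (cases "z \<le> \<lfloor>x\<rfloor>")
  case True
  then have "real_of_int z \<le> real_of_int \<lfloor>x\<rfloor>" by simp
  then show ?thesis using frac_ge_0[of x] unfolding frac_def by linarith
next
  case False
  then have "real_of_int z \<ge> real_of_int \<lfloor>x\<rfloor> + 1" by linarith
  then show ?thesis using frac_lt_1[of x] unfolding frac_def by linarith
qed

lemma multiples_away_from_Ints_if_irrational:
  fixes c :: real
  assumes "c \<notin> \<rat>"
  shows "\<exists>\<epsilon>>0. \<forall>h\<in>{1..H}. \<forall>z::int. \<bar>c * real h - real_of_int z\<bar> \<ge> \<epsilon>"
proof -
  define f where "f = (\<lambda>h::nat. min (frac (c * real h)) (1 - frac (c * real h)))"
  have "f h > 0" if "h \<ge> 1" for h
  proof -
    have "c * real h \<notin> \<int>"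
    proof
      assume "c * real h \<in> \<int>"
      then obtain z where "c * real h = real_of_int z" by (auto elim: Ints_cases)
      then have "c = real_of_int z / real h" using that by (simp add: field_simps)
      then show False using assms by simp
    qed
    then show ?thesis unfolding f_def using frac_lt_1 by auto
  qed
  then have "Min (insert 1 (f ` {1..H})) > 0" by (subst Min_gr_iff) auto
  moreover have "\<bar>c * real h - real_of_int z\<bar> \<ge> Min (insert 1 (f ` {1..H}))" if "h \<in> {1..H}" for h z
  proof -
    have "Min (insert 1 (f ` {1..H})) \<le> f h" using that by (intro Min_le) auto
    then show ?thesis using dist_Ints_ge_frac[of "c * real h" z] unfolding f_def by linarith
  qed
  ultimately show ?thesis by blast
qed

text \<open>If integers \<open>L n\<close> stay within \<open>O(1/n)\<close> of the line \<open>u / v * n + d\<close> along a residue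
  class modulo \<open>v\<close>, their offsets from the line differ by integers and are eventually small,
  hence constant and then zero.\<close>
lemma progression_offsets_vanish:
  fixes d K :: real and L :: "nat \<Rightarrow> nat" and u v :: nat
  assumes C: "infinite C" "\<forall>n\<in>C. n mod v = \<rho>" and v: "v \<noteq> 0"
    and near: "\<forall>n\<in>C. \<bar>real (L n) - (real u / real v * real n + d)\<bar> \<le> K / real n \<and> K / real n \<le> 1 / 4"
  shows "\<forall>n\<in>C. real (L n) = real u / real v * real n + d"
proof -
  define c where "c = real u / real v"
  obtain n1 where n1: "n1 \<in> C" using C(1) by (metis finite.emptyI ex_in_conv)
  define \<delta> where "\<delta> = real (L n1) - (c * real n1 + d)"
  have offset: "real (L n) - (c * real n + d) = \<delta>" if n: "n \<in> C" for n
  proof -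
    have "int v dvd (int n - int n1)"
      using C(2) n n1 by (metis mod_eq_dvd_iff of_nat_mod)
    then obtain t where "int n - int n1 = int v * t" by (auto elim: dvdE)
    then have "real n - real n1 = real v * real_of_int t" by (metis of_int_of_nat_eq of_int_diff of_int_mult)
    then have "c * (real n - real n1) = real u * real_of_int t" using v unfolding c_def by simp
    then have z: "real_of_int ((int (L n) - int (L n1)) - int u * t) = (real (L n) - (c * real n + d)) - \<delta>"
      unfolding \<delta>_def by (simp add: algebra_simps)
    have "\<bar>real (L n) - (c * real n + d)\<bar> \<le> K / real n" "K / real n \<le> 1 / 4"
      "\<bar>real (L n1) - (c * real n1 + d)\<bar> \<le> K / real n1" "K / real n1 \<le> 1 / 4"
      using near n n1 unfolding c_def by auto
    then have "\<bar>real_of_int ((int (L n) - int (L n1)) - int u * t)\<bar> < 1"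
      unfolding z \<delta>_def by linarith
    then have "(int (L n) - int (L n1)) - int u * t = 0" by linarith
    then show ?thesis using z by simp
  qed
  have "\<delta> = 0"
  proof (rule ccontr)
    assume nz: "\<delta> \<noteq> 0"
    obtain n where n: "n \<in> C" "n > nat \<lceil>K / \<bar>\<delta>\<bar>\<rceil>" using C(1) by (meson infinite_nat_iff_unbounded)
    then have "\<bar>\<delta>\<bar> \<le> K / real n" using offset[OF n(1)] near unfolding c_def by force
    moreover have "real n > K / \<bar>\<delta>\<bar>" using n by linarith
    then have "K < real n * \<bar>\<delta>\<bar>" using nz by (simp add: pos_divide_less_eq)
    moreover have "real n > 0" using n by simp
    ultimately show False by (simp add: pos_le_divide_eq mult.commute)
  qed
  then show ?thesis using offset unfolding c_def by simp
qed

section \<open>Values of one polynomial among the values of another\<close>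

lemma polyvals_iff: "v \<in> polyvals p \<longleftrightarrow> (\<exists>l::nat. l \<ge> 1 \<and> v = poly p (real l))"
  unfolding polyvals_def by auto

locale equal_degree_polys =
  fixes P Q :: "real poly" and m :: nat
  assumes m_pos: "m \<ge> 1" and degree_P: "degree P = m" and degree_Q: "degree Q = m"
    and lead_P: "lead_coeff P > 0" and lead_Q: "lead_coeff Q > 0"
begin

definition slope :: real where
  "slope = (lead_coeff P / lead_coeff Q) powr (1 / real m)"

lemma slope_pos: "slope > 0"
  unfolding slope_def using lead_P lead_Q by (auto simp: divide_pos_pos)

lemma slope_power: "slope ^ m = lead_coeff P / lead_coeff Q"
proof -
  have "slope ^ m = slope powr real m" using slope_pos by (simp add: powr_realpow)
  also have "\<dots> = (lead_coeff P / lead_coeff Q) powr (1 / real m * real m)"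
    unfolding slope_def by (simp add: powr_powr)
  finally show ?thesis using m_pos lead_P lead_Q by simp
qed

lemma shift_cancels_top_coeffs: "\<exists>d. \<forall>i\<ge>m - 1. coeff (pcompose Q [:d, slope:] - P) i = 0"
proof -
  obtain j where j: "m = Suc j" using m_pos by (cases m) auto
  define d where "d = (coeff P j - coeff Q j * slope ^ j) / (lead_coeff Q * real m * slope ^ j)"
  have dQ: "degree Q = Suc j" using degree_Q j by simp
  have "coeff (pcompose Q [:d, slope:] - P) i = 0" if i: "i \<ge> j" for i
  proof -
    consider "i = j" | "i = Suc j" | "i > Suc j" using i by linarith
    then show ?thesis
    proof cases
      case 1
      have "lead_coeff Q \<noteq> 0" using lead_Q by linarith
      then have "lead_coeff Q * real m * slope ^ j \<noteq> 0" using slope_pos m_pos by simp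
      then have "coeff Q (Suc j) * real (Suc j) * slope ^ j * d = coeff P j - coeff Q j * slope ^ j"
        unfolding d_def using dQ j by (simp add: field_simps)
      then show ?thesis using 1 coeff_pcompose_linear_top(2)[OF dQ, of d slope] by simp
    next
      case 2
      have "coeff Q (Suc j) * slope ^ Suc j = coeff P (Suc j)"
        using slope_power lead_Q degree_P degree_Q j by (simp add: field_simps)
      then show ?thesis using 2 coeff_pcompose_linear_top(1)[OF dQ, of d slope] by simp
    next
      case 3
      then show ?thesis
        using coeff_pcompose_linear_top(3)[OF dQ, of i d slope] degree_P j by (simp add: coeff_eq_0)
    qed
  qed
  then show ?thesis using j by auto
qed

lemma shifted_difference_bound:
  "\<exists>d CG. CG \<ge> 0 \<and> (\<forall>s\<ge>1. \<bar>poly Q (slope * s + d) - poly P s\<bar> * s \<le> CG * s ^ (m - 1))"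
proof -
  obtain d where "\<forall>i\<ge>m - 1. coeff (pcompose Q [:d, slope:] - P) i = 0"
    using shift_cancels_top_coeffs by blast
  from poly_mult_le_power_if_coeffs_vanish[OF this] obtain CG where CG:
    "CG \<ge> 0" "\<forall>s\<ge>1. \<bar>poly (pcompose Q [:d, slope:] - P) s\<bar> * s \<le> CG * s ^ (m - 1)"
    by blast
  have eq: "poly (pcompose Q [:d, slope:] - P) s = poly Q (slope * s + d) - poly P s" for s
    by (simp add: poly_pcompose algebra_simps)
  show ?thesis
  proof (rule exI[of _ d], rule exI[of _ CG])
  qed (use CG eq in auto)
qed

lemma preimages_of_large_values_large:
  assumes "Z \<ge> 1"
  shows "\<exists>S. \<forall>s\<ge>S. poly Q Z < poly P s \<and> (\<forall>y. 1 \<le> y \<longrightarrow> poly Q y = poly P s \<longrightarrow> Z \<le> y)"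
proof -
  obtain B where B: "\<forall>y. 1 \<le> y \<and> y \<le> Z \<longrightarrow> \<bar>poly Q y\<bar> \<le> B"
    using isCont_bounded[of 1 Z "\<lambda>y. \<bar>poly Q y\<bar>"] assms by auto
  obtain S where "\<forall>s\<ge>S. poly P s \<ge> B + 1"
    using poly_eventually_ge[of P "B + 1"] lead_P degree_P m_pos by auto
  then have lt: "poly Q y < poly P s" if "s \<ge> S" "1 \<le> y" "y \<le> Z" for s y
    using B that by force
  show ?thesis
  proof (intro exI allI impI conjI)
    fix s assume s: "S \<le> s"
    show "poly Q Z < poly P s" using lt[OF s] assms by simp
    show "Z \<le> y" if "1 \<le> y" "poly Q y = poly P s" for y
    proof (rule ccontr)
      assume "\<not> Z \<le> y"
      then show False using lt[OF s that(1)] that(2) by simp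
    qed
  qed
qed

lemma inverse_asymptotics:
  "\<exists>d Z S K. Z \<ge> 1 \<and> S \<ge> 1 \<and> K \<ge> 0 \<and> strict_mono_on {Z..} (poly Q) \<and>
     (\<forall>s\<ge>S. \<forall>y\<ge>1. poly Q y = poly P s \<longrightarrow> y \<ge> Z \<and> \<bar>y - (slope * s + d)\<bar> \<le> K / s) \<and>
     (\<forall>s\<ge>S. \<exists>y\<ge>Z. poly Q y = poly P s) \<and> (\<forall>s\<ge>S. K / s \<le> 1 / 2)"
proof -
  obtain d CG where CG: "CG \<ge> 0"
    and diff: "\<forall>s\<ge>1. \<bar>poly Q (slope * s + d) - poly P s\<bar> * s \<le> CG * s ^ (m - 1)"
    using shifted_difference_bound by blast
  obtain \<kappa> Z where \<kappa>: "\<kappa> > 0" and Z: "Z \<ge> 1"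
    and inc: "\<forall>v u. Z \<le> v \<longrightarrow> v \<le> u \<longrightarrow> poly Q u - poly Q v \<ge> \<kappa> * v ^ (m - 1) * (u - v)"
    using poly_increment_lower_bound[of Q] lead_Q degree_Q m_pos by auto
  obtain S1 where S1: "\<forall>s\<ge>S1. poly Q Z < poly P s \<and> (\<forall>y. 1 \<le> y \<longrightarrow> poly Q y = poly P s \<longrightarrow> Z \<le> y)"
    using preimages_of_large_values_large[OF Z] by blast
  define \<theta> where "\<theta> = slope / 2"
  have \<theta>: "\<theta> > 0" unfolding \<theta>_def using slope_pos by simp
  define K where "K = CG / (\<kappa> * \<theta> ^ (m - 1))"
  have K: "K \<ge> 0" unfolding K_def using CG \<kappa> \<theta> by simp
  define S where "S = max (max 1 S1) (max ((2 / slope) * (\<bar>d\<bar> + 1 + Z)) (2 * K + 1))"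
  have S: "S \<ge> 1" "\<forall>s\<ge>S. s \<ge> S1" "\<forall>s\<ge>S. K / s \<le> 1 / 2"
    unfolding S_def using K by (auto simp: field_simps)
  have line: "Z \<le> \<theta> * s" "\<theta> * s \<le> (slope * s + d) - 1" if "s \<ge> S" for s
  proof -
    have "slope * s \<ge> 2 * (\<bar>d\<bar> + 1 + Z)"
      using that slope_pos unfolding S_def by (simp add: field_simps)
    then show "Z \<le> \<theta> * s" "\<theta> * s \<le> (slope * s + d) - 1" unfolding \<theta>_def using Z by (auto simp: field_simps)
  qed
  have err: "\<bar>poly Q (slope * s + d) - poly P s\<bar> < \<kappa> * (\<theta> * s) ^ (m - 1)" if s: "s \<ge> S" for s
  proof -
    have s1: "s \<ge> 1" "s > K" using s unfolding S_def by auto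
    have "\<bar>poly Q (slope * s + d) - poly P s\<bar> * s \<le> K * (\<kappa> * \<theta> ^ (m - 1)) * s ^ (m - 1)"
      using diff s1(1) \<kappa> \<theta> unfolding K_def by simp
    also have "\<dots> < s * (\<kappa> * \<theta> ^ (m - 1)) * s ^ (m - 1)"
      using s1 \<kappa> \<theta> by (intro mult_strict_right_mono) auto
    finally show ?thesis using s1 by (simp add: power_mult_distrib mult_ac)
  qed
  have large: "poly Q Z < poly P s" "\<And>y. 1 \<le> y \<Longrightarrow> poly Q y = poly P s \<Longrightarrow> Z \<le> y"
    if "s \<ge> S" for s
    using S1 S(2) that by blast+
  have close: "y \<ge> Z \<and> \<bar>y - (slope * s + d)\<bar> \<le> K / s"
    if s: "s \<ge> S" and y: "y \<ge> 1" "poly Q y = poly P s" for s y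
  proof -
    have yZ: "y \<ge> Z" using large(2)[OF s y] .
    have "\<kappa> * (\<theta> * s) ^ (m - 1) * \<bar>y - (slope * s + d)\<bar> \<le> \<bar>poly Q (slope * s + d) - poly P s\<bar>"
      using increment_bound_root_close[OF inc \<kappa> _ line[OF s] err[OF s] yZ y(2)] Z by linarith
    also have "\<bar>poly Q (slope * s + d) - poly P s\<bar> \<le> CG * s ^ (m - 1) / s"
      using diff S(1) s by (simp add: field_simps)
    finally show ?thesis
      using yZ \<kappa> \<theta> S(1) s unfolding K_def by (simp add: field_simps power_mult_distrib)
  qed
  have exists: "\<exists>y\<ge>Z. poly Q y = poly P s" if s: "s \<ge> S" for s
    by (rule increment_bound_root_exists[OF inc \<kappa> _ line[OF s] err[OF s]])
      (use Z large(1)[OF s] in auto)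
  have mono: "strict_mono_on {Z..} (poly Q)"
    by (rule strict_mono_on_if_increment_bound[OF inc \<kappa>]) (use Z in simp)
  show ?thesis
  proof (rule exI[of _ d], rule exI[of _ Z], rule exI[of _ S], rule exI[of _ K])
  qed (use Z S(1,3) K close exists mono in auto)
qed

lemma density_zero_if_slope_irrational:
  assumes irr: "slope \<notin> \<rat>"
  shows "has_density (\<lambda>n. poly P (real n) \<in> polyvals Q) 0"
proof -
  obtain d Z S K where Z: "Z \<ge> 1" and S: "S \<ge> 1" and K: "K \<ge> 0"
    and near: "\<forall>s\<ge>S. \<forall>y\<ge>1. poly Q y = poly P s \<longrightarrow> y \<ge> Z \<and> \<bar>y - (slope * s + d)\<bar> \<le> K / s"
    using inverse_asymptotics by blast
  show ?thesis
  proof (rule has_density_zero_if_sparse, intro allI impI)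
    fix H :: nat assume H: "H \<ge> 1"
    obtain \<epsilon> where e0: "\<epsilon> > 0"
      and ele: "\<forall>h\<in>{1..H}. \<forall>z::int. \<bar>slope * real h - real_of_int z\<bar> \<ge> \<epsilon>"
      using multiples_away_from_Ints_if_irrational[OF irr] by blast
    show "\<exists>N. sparse (\<lambda>n. poly P (real n) \<in> polyvals Q) H N"
      unfolding sparse_def
    proof (intro exI allI impI notI)
      fix a b :: nat assume ab: "nat \<lceil>max S (2 * K / \<epsilon> + 1)\<rceil> \<le> a" "a < b" "b \<le> a + H"
        and Ea: "poly P (real a) \<in> polyvals Q" and Eb: "poly P (real b) \<in> polyvals Q"
      have aS: "real a \<ge> S" and a2: "real a > 2 * K / \<epsilon>" using ab by linarith+
      have a1: "real a \<ge> 1" using aS S by simp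
      obtain la where la: "la \<ge> 1" "poly P (real a) = poly Q (real la)" using Ea by (auto simp: polyvals_iff)
      obtain lb where lb: "lb \<ge> 1" "poly P (real b) = poly Q (real lb)" using Eb by (auto simp: polyvals_iff)
      have da: "\<bar>real la - (slope * real a + d)\<bar> \<le> K / real a" using near aS la by simp
      have "\<bar>real lb - (slope * real b + d)\<bar> \<le> K / real b" using near aS lb ab by simp
      also have "K / real b \<le> K / real a" using K a1 ab by (intro divide_left_mono) auto
      finally have db: "\<bar>real lb - (slope * real b + d)\<bar> \<le> K / real a" .
      define h where "h = b - a"
      have h: "h \<in> {1..H}" using ab unfolding h_def by auto
      have "slope * real h - real_of_int (int lb - int la)
          = (slope * real b + d - real lb) - (slope * real a + d - real la)"
        unfolding h_def using ab by (simp add: of_nat_diff algebra_simps)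
      then have "\<bar>slope * real h - real_of_int (int lb - int la)\<bar> \<le> 2 * K / real a" using da db by linarith
      also have "\<dots> < \<epsilon>" using a2 e0 a1 by (simp add: field_simps)
      finally show False using ele[rule_format, OF h, of "int lb - int la"] by linarith
    qed
  qed
qed

lemma linear_identity_if_infinitely_many_hits:
  assumes rat: "slope \<in> \<rat>" and inf: "infinite {n::nat. poly P (real n) \<in> polyvals Q}"
  shows "\<exists>d\<in>\<rat>. \<forall>y. poly Q (slope * y + d) = poly P y"
proof -
  obtain d Z S K where K: "K \<ge> 0"
    and near: "\<forall>s\<ge>S. \<forall>y\<ge>1. poly Q y = poly P s \<longrightarrow> y \<ge> Z \<and> \<bar>y - (slope * s + d)\<bar> \<le> K / s"
    using inverse_asymptotics by blast
  obtain u v :: nat where uv: "v \<noteq> 0" "slope = real u / real v"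
    using rat slope_pos by (elim Rats_abs_nat_div_natE) auto
  define N where "N = nat \<lceil>max S (4 * K + 1)\<rceil>"
  define E where "E = {n::nat. poly P (real n) \<in> polyvals Q \<and> n \<ge> N}"
  have "{n::nat. poly P (real n) \<in> polyvals Q} \<subseteq> E \<union> {..<N}"
    unfolding E_def by auto
  then have "infinite (E \<union> {..<N})" using inf by (rule infinite_super)
  then have "infinite E" by simp
  moreover have "E = (\<Union>\<rho><v. {n \<in> E. n mod v = \<rho>})" using uv by auto
  ultimately obtain \<rho> where "infinite {n \<in> E. n mod v = \<rho>}"
    by (metis (no_types, lifting) finite_UN finite_lessThan)
  then obtain C where C: "infinite C" "C \<subseteq> E" "\<forall>n\<in>C. n mod v = \<rho>" by blast
  have "\<exists>l::nat. poly Q (real l) = poly P (real n) \<and>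
      \<bar>real l - (slope * real n + d)\<bar> \<le> K / real n \<and> K / real n \<le> 1 / 4" if nC: "n \<in> C" for n
  proof -
    have n: "real n \<ge> S" "K / real n \<le> 1 / 4"
      using nC C K unfolding E_def N_def by (auto simp: field_simps)
    obtain l where "l \<ge> 1" "poly P (real n) = poly Q (real l)"
      using nC C unfolding E_def by (auto simp: polyvals_iff)
    then show ?thesis using near n by (intro exI[of _ l]) auto
  qed
  then obtain L where L: "\<forall>n\<in>C. poly Q (real (L n)) = poly P (real n) \<and>
      \<bar>real (L n) - (slope * real n + d)\<bar> \<le> K / real n \<and> K / real n \<le> 1 / 4"
    by metis
  have on_line: "\<forall>n\<in>C. real (L n) = slope * real n + d"
    using progression_offsets_vanish[OF C(1,3) uv(1), where L = L and d = d and K = K] L unfolding uv(2) by blast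
  have "poly (pcompose Q [:d, slope:]) (real n) = poly P (real n)" if "n \<in> C" for n
    using L on_line that by (simp add: poly_pcompose algebra_simps)
  then have eq: "pcompose Q [:d, slope:] = P" using C(1) poly_eq_if_agree_on_infinite_nat_set by blast
  have "poly Q (slope * y + d) = poly P y" for y
    using arg_cong[OF eq, of "\<lambda>p. poly p y"] by (simp add: poly_pcompose algebra_simps)
  moreover obtain n where "n \<in> C" using C(1) by (metis finite.emptyI ex_in_conv)
  then have "d = real (L n) - slope * real n" using on_line by simp
  then have "d \<in> \<rat>" using rat by simp
  ultimately show ?thesis by blast
qed

lemma hits_eventually_iff_on_lattice:
  assumes ab: "\<alpha> > 0" "\<beta> > 0" and slope: "slope = real \<beta> / real \<alpha>"
    and ident: "\<forall>y. poly Q y = poly P (real \<alpha> / real \<beta> * (y - x))"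
  shows "\<exists>N. \<forall>n\<ge>N. poly P (real n) \<in> polyvals Q \<longleftrightarrow> on_lattice \<alpha> \<beta> x n"
proof -
  obtain d Z S K where "\<forall>s\<ge>S. \<forall>y\<ge>1. poly Q y = poly P s \<longrightarrow> y \<ge> Z \<and> \<bar>y - (slope * s + d)\<bar> \<le> K / s"
    and mono: "strict_mono_on {Z..} (poly Q)"
    using inverse_asymptotics by blast
  then have large: "y \<ge> Z" if "s \<ge> S" "y \<ge> 1" "poly Q y = poly P s" for s y
    using that by blast
  have ident': "poly Q (slope * y + x) = poly P y" for y
    using ident[rule_format, of "slope * y + x"] ab unfolding slope by simp
  have conv: "real n = real \<alpha> / real \<beta> * (y - x) \<longleftrightarrow> y = slope * real n + x" for n y
    unfolding slope using ab by (auto simp: field_simps)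
  show ?thesis
  proof (intro exI allI impI)
    fix n :: nat assume "nat \<lceil>max S ((1 - x) / slope)\<rceil> \<le> n"
    then have nS: "real n \<ge> S" and "real n \<ge> (1 - x) / slope" by linarith+
    then have y1: "slope * real n + x \<ge> 1" using slope_pos by (simp add: field_simps)
    show "poly P (real n) \<in> polyvals Q \<longleftrightarrow> on_lattice \<alpha> \<beta> x n"
    proof
      assume "poly P (real n) \<in> polyvals Q"
      then obtain l where l: "l \<ge> 1" "poly P (real n) = poly Q (real l)" by (auto simp: polyvals_iff)
      have "real l = slope * real n + x"
        using strict_mono_on_eqD[OF mono] l ident'[of "real n"] large[OF nS, of "real l"]
          large[OF nS y1] by auto
      then have "real n = real \<alpha> / real \<beta> * (real l - x)" using conv[of n "real l"] by blast
      then show "on_lattice \<alpha> \<beta> x n" unfolding on_lattice_def by (metis of_int_of_nat_eq)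
    next
      assume "on_lattice \<alpha> \<beta> x n"
      then obtain z :: int where "real_of_int z = slope * real n + x"
        unfolding on_lattice_def using conv by blast
      moreover from this have "z \<ge> 1" using y1 by linarith
      ultimately show "poly P (real n) \<in> polyvals Q" unfolding polyvals_iff using ident'
        by (intro exI[of _ "nat z"]) auto
    qed
  qed
qed

lemma inverse_floor:
  "\<exists>(Y :: nat \<Rightarrow> nat) (N :: nat) S B. inj_on (\<lambda>n. poly Q (real n)) {N..} \<and>
     (\<forall>r n. real r \<ge> S \<longrightarrow> n \<ge> N \<longrightarrow> (n \<le> Y r \<longleftrightarrow> poly Q (real n) \<le> poly P (real r))) \<and>
     (\<forall>r. real r \<ge> S \<longrightarrow> \<bar>real (Y r) - slope * real r\<bar> \<le> B)"
proof -
  obtain d Z S K where Z: "Z \<ge> 1" and mono: "strict_mono_on {Z..} (poly Q)"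
    and near: "\<forall>s\<ge>S. \<forall>y\<ge>1. poly Q y = poly P s \<longrightarrow> y \<ge> Z \<and> \<bar>y - (slope * s + d)\<bar> \<le> K / s"
    and solvable: "\<forall>s\<ge>S. \<exists>y\<ge>Z. poly Q y = poly P s" and half: "\<forall>s\<ge>S. K / s \<le> 1 / 2"
    using inverse_asymptotics by blast
  define ys where "ys = (\<lambda>s. SOME y. y \<ge> Z \<and> poly Q y = poly P s)"
  have ys: "ys s \<ge> Z" "poly Q (ys s) = poly P s" "\<bar>ys s - (slope * s + d)\<bar> \<le> 1 / 2" if s: "s \<ge> S" for s
  proof -
    have "\<exists>y. y \<ge> Z \<and> poly Q y = poly P s" using solvable s by blast
    then have "ys s \<ge> Z \<and> poly Q (ys s) = poly P s" unfolding ys_def by (rule someI_ex)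
    then show "ys s \<ge> Z" "poly Q (ys s) = poly P s" by auto
    then have "\<bar>ys s - (slope * s + d)\<bar> \<le> K / s" using near[rule_format, OF s, of "ys s"] Z by simp
    then show "\<bar>ys s - (slope * s + d)\<bar> \<le> 1 / 2" using half[rule_format, OF s] by linarith
  qed
  define Y where "Y = (\<lambda>r::nat. nat \<lfloor>ys (real r)\<rfloor>)"
  define N where "N = nat \<lceil>Z\<rceil>"
  have NZ: "real n \<ge> Z" if "n \<ge> N" for n using that unfolding N_def by linarith
  have "inj_on (\<lambda>n. poly Q (real n)) {N..}"
  proof (rule inj_onI)
    fix a b assume "a \<in> {N..}" "b \<in> {N..}" "poly Q (real a) = poly Q (real b)"
    then have "real a = real b" using NZ strict_mono_on_eqD[OF mono, of "real a" "real b"] by simp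
    then show "a = b" by simp
  qed
  moreover have "n \<le> Y r \<longleftrightarrow> poly Q (real n) \<le> poly P (real r)" if "real r \<ge> S" "n \<ge> N" for n r
  proof -
    have "\<lfloor>ys (real r)\<rfloor> \<ge> 0" using ys(1)[OF that(1)] Z by simp
    then have "n \<le> Y r \<longleftrightarrow> int n \<le> \<lfloor>ys (real r)\<rfloor>" unfolding Y_def by (simp add: le_nat_iff)
    also have "\<dots> \<longleftrightarrow> real n \<le> ys (real r)" by (simp add: le_floor_iff)
    also have "\<dots> \<longleftrightarrow> poly Q (real n) \<le> poly Q (ys (real r))"
      using strict_mono_on_less_eq[OF mono] NZ[OF that(2)] ys(1)[OF that(1)] by auto
    finally show ?thesis using ys(2)[OF that(1)] by simp
  qed
  moreover have "\<bar>real (Y r) - slope * real r\<bar> \<le> \<bar>d\<bar> + 2" if r: "real r \<ge> S" for r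
  proof -
    have "real (Y r) = real_of_int \<lfloor>ys (real r)\<rfloor>" unfolding Y_def using ys(1)[OF r] Z by simp
    then show ?thesis using ys(3)[OF r] unfolding abs_le_iff by linarith
  qed
  ultimately show ?thesis by blast
qed

text \<open>Counting preimages under \<open>P\<close> of the values \<open>Q n\<close> up to \<open>r\<close> amounts, up to a bounded
  error, to counting the \<open>n \<le> Y r\<close>, where \<open>Q (Y r) \<approx> P r\<close> and hence \<open>Y r \<approx> slope * r\<close>.\<close>
lemma preimage_density:
  assumes mono: "strict_mono_on {R..} (poly P)" and dens: "has_density D \<rho>"
  shows "(\<lambda>r. real (card ({x. R \<le> x \<and> (\<exists>n\<ge>1. D n \<and> poly P x = poly Q (real n))} \<inter> {1..real r}))
            / real r) \<longlonglongrightarrow> slope * \<rho>"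
proof -
  obtain Y N0 S B where inj0: "inj_on (\<lambda>n. poly Q (real n)) {N0..}"
    and cut0: "\<forall>r n. real r \<ge> S \<longrightarrow> n \<ge> N0 \<longrightarrow> (n \<le> Y r \<longleftrightarrow> poly Q (real n) \<le> poly P (real r))"
    and Y: "\<forall>r. real r \<ge> S \<longrightarrow> \<bar>real (Y r) - slope * real r\<bar> \<le> B"
    using inverse_floor by blast
  define R' where "R' = max R 1"
  obtain S' where S': "\<forall>s\<ge>S'. poly Q s \<ge> poly P R'"
    using poly_eventually_ge[of Q "poly P R'"] lead_Q degree_Q m_pos by auto
  define N where "N = max N0 (nat \<lceil>S'\<rceil>)"
  have large: "poly P R' \<le> poly Q (real n)" if "n \<ge> N" for n
    using that S' unfolding N_def by (metis max.bounded_iff nat_ceiling_le_eq)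
  have inj: "inj_on (\<lambda>n. poly Q (real n)) {N..}" using inj0 by (rule inj_on_subset) (auto simp: N_def)
  define X where "X = (\<lambda>r::nat. {x. R \<le> x \<and> (\<exists>n\<ge>1. D n \<and> poly P x = poly Q (real n))} \<inter> {1..real r})"
  have "\<forall>\<^sub>F r in sequentially. \<bar>real (card (X r)) - real (count_upto D (Y r))\<bar> \<le> real N"
  proof (rule eventually_sequentiallyI[of "nat \<lceil>max S R'\<rceil>"])
    fix r assume "nat \<lceil>max S R'\<rceil> \<le> r"
    then have r: "real r \<ge> S" "R' \<le> real r" by linarith+
    then have cut: "\<forall>n\<ge>N. n \<le> Y r \<longleftrightarrow> poly Q (real n) \<le> poly P (real r)" using cut0 by (auto simp: N_def)
    then have "\<forall>n\<ge>N. poly Q (real n) \<le> poly P (real r) \<longrightarrow> n \<le> Y r" by blast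
    from preimages_finite_and_card_le[OF mono this, of D]
    have fin: "finite (X r)" and up: "card (X r) \<le> N + count_upto D (Y r)" unfolding X_def by auto
    have "\<forall>n\<ge>N. n \<le> Y r \<longrightarrow> poly Q (real n) \<le> poly P (real r)" using cut by blast
    from count_upto_le_card_preimages[where f = "poly P" and R = R, OF _ _ _ r(2) inj _ this, of D] fin large
    have "count_upto D (Y r) \<le> N + card (X r)" unfolding X_def R'_def by auto
    with up show "\<bar>real (card (X r)) - real (count_upto D (Y r))\<bar> \<le> real N" by linarith
  qed
  moreover have "(\<lambda>r. real (count_upto D (Y r)) / real r) \<longlonglongrightarrow> slope * \<rho>"
    by (rule has_density_rescaled[OF dens slope_pos, of _ B])
      (use Y in \<open>auto intro: eventually_sequentiallyI[of "nat \<lceil>S\<rceil>"]\<close>)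
  ultimately show ?thesis unfolding X_def by (rule LIMSEQ_div_real_if_bounded_diff)
qed

end

section \<open>The densities \<open>M / a\<close> for a family of polynomials\<close>

lemma real_card_UNION:
  assumes "finite A" and "\<forall>a\<in>A. finite (X a)"
  shows "real (card (\<Union>(X ` A)))
       = (\<Sum>B | B \<subseteq> A \<and> B \<noteq> {}. (-1) ^ (card B + 1) * real (card (\<Inter>(X ` B))))"
proof -
  interpret Incl_Excl finite "\<lambda>S. real (card S)"
    by unfold_locales (auto simp: card_Un_disjnt)
  show ?thesis using restricted_indexed[of A X] assms by simp
qed

lemma cc_mult_cc:
  assumes "lead_coeff (q i) > 0" "lead_coeff (q j) > 0"
  shows "cc q m i j * cc q m j i = 1"
proof -
  have "cc q m i j * cc q m j i
      = (lead_coeff (q j) / lead_coeff (q i) * (lead_coeff (q i) / lead_coeff (q j))) powr (1 / real m)"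
    unfolding cc_def using assms by (intro powr_mult[symmetric])
  also have "lead_coeff (q j) / lead_coeff (q i) * (lead_coeff (q i) / lead_coeff (q j)) = 1"
    using assms by (simp add: field_simps del: leading_coeff_0_iff)
  finally show ?thesis by simp
qed

lemma cc_pos:
  assumes "lead_coeff (q i) > 0" "lead_coeff (q j) > 0"
  shows "cc q m i j > 0"
  unfolding cc_def using assms by (auto simp: divide_pos_pos)

lemma cc_self:
  assumes "lead_coeff (q i) > 0"
  shows "cc q m i i = 1"
  using assms unfolding cc_def by auto

definition rational_shift_data ::
    "(nat \<Rightarrow> real poly) \<Rightarrow> nat \<Rightarrow> nat \<Rightarrow> nat set \<Rightarrow> (nat \<Rightarrow> nat) \<Rightarrow> (nat \<Rightarrow> nat) \<Rightarrow> (nat \<Rightarrow> real) \<Rightarrow> bool"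
  where "rational_shift_data q m t S \<alpha> \<beta> x \<longleftrightarrow> (\<forall>i\<in>S. \<alpha> i > 0 \<and> \<beta> i > 0 \<and> coprime (\<alpha> i) (\<beta> i) \<and>
      cc q m i t = real (\<beta> i) / real (\<alpha> i) \<and> x i \<in> \<rat> \<and>
      (\<forall>y. poly (q i) y = poly (q t) (cc q m t i * (y - x i))))"

definition shift_data :: "(nat \<Rightarrow> real poly) \<Rightarrow> nat \<Rightarrow> nat set \<Rightarrow> (nat \<Rightarrow> nat) \<times> (nat \<Rightarrow> nat) \<times> (nat \<Rightarrow> real)"
  where "shift_data q m T = (SOME (\<alpha>, \<beta>, x). rational_shift_data q m (Min T) (T - {Min T}) \<alpha> \<beta> x)"

text \<open>\<open>M\<close> and \<open>a\<close> of the theorem, computed from an arbitrary choice of shift data (all choices give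
  the same values). For \<open>|T| = 1\<close> the shift data are vacuous and \<open>M = a = 1\<close>; without shift data
  \<open>M / a = 0 / 1\<close>.\<close>
definition density_num :: "(nat \<Rightarrow> real poly) \<Rightarrow> nat \<Rightarrow> nat set \<Rightarrow> int" where
  "density_num q m T = (if \<exists>\<alpha> \<beta> x. rational_shift_data q m (Min T) (T - {Min T}) \<alpha> \<beta> x
     then (case shift_data q m T of (\<alpha>, \<beta>, x) \<Rightarrow> int (card (compatible_residues (T - {Min T}) \<alpha> \<beta> x)))
     else 0)"

definition density_den :: "(nat \<Rightarrow> real poly) \<Rightarrow> nat \<Rightarrow> nat set \<Rightarrow> int" where
  "density_den q m T = (if \<exists>\<alpha> \<beta> x. rational_shift_data q m (Min T) (T - {Min T}) \<alpha> \<beta> x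
     then (case shift_data q m T of (\<alpha>, \<beta>, x) \<Rightarrow> Lcm ((\<lambda>i. int (\<alpha> i)) ` (T - {Min T})))
     else 1)"

lemma rational_shift_data_shift_data:
  assumes "\<exists>\<alpha> \<beta> x. rational_shift_data q m (Min T) (T - {Min T}) \<alpha> \<beta> x"
  obtains \<alpha> \<beta> x where "shift_data q m T = (\<alpha>, \<beta>, x)"
    and "rational_shift_data q m (Min T) (T - {Min T}) \<alpha> \<beta> x"
proof -
  from assms have "\<exists>p. case p of (\<alpha>, \<beta>, x) \<Rightarrow> rational_shift_data q m (Min T) (T - {Min T}) \<alpha> \<beta> x"
    by auto
  then have "case shift_data q m T of (\<alpha>, \<beta>, x) \<Rightarrow> rational_shift_data q m (Min T) (T - {Min T}) \<alpha> \<beta> x"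
    unfolding shift_data_def by (rule someI_ex)
  then show ?thesis using that by (auto split: prod.splits)
qed

lemma rational_shift_data_alpha_unique:
  assumes "rational_shift_data q m t S \<alpha> \<beta> x" "rational_shift_data q m t S \<alpha>' \<beta>' x'" "i \<in> S"
  shows "\<alpha> i = \<alpha>' i"
proof -
  have h: "\<alpha> i > 0" "\<beta> i > 0" "coprime (\<beta> i) (\<alpha> i)" "cc q m i t = real (\<beta> i) / real (\<alpha> i)"
       "\<alpha>' i > 0" "\<beta>' i > 0" "coprime (\<beta>' i) (\<alpha>' i)" "cc q m i t = real (\<beta>' i) / real (\<alpha>' i)"
    using assms unfolding rational_shift_data_def by (auto simp: coprime_commute)
  then have "real (\<beta> i) * real (\<alpha>' i) = real (\<beta>' i) * real (\<alpha> i)" by (simp add: field_simps)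
  then have "\<beta> i * \<alpha>' i = \<beta>' i * \<alpha> i" by (metis of_nat_eq_iff of_nat_mult)
  then show ?thesis using coprime_crossproduct_nat[OF h(3) h(7)] by simp
qed

definition common_value :: "(nat \<Rightarrow> real poly) \<Rightarrow> nat set \<Rightarrow> nat \<Rightarrow> bool" where
  "common_value q T n \<longleftrightarrow> (\<forall>i\<in>T. poly (q (Min T)) (real n) \<in> polyvals (q i))"

lemma common_value_iff:
  assumes "finite T" "T \<noteq> {}" "n \<ge> 1"
  shows "common_value q T n \<longleftrightarrow> (\<forall>i\<in>T - {Min T}. poly (q (Min T)) (real n) \<in> polyvals (q i))"
  using assms unfolding common_value_def polyvals_iff by auto

locale poly_family =
  fixes q :: "nat \<Rightarrow> real poly" and k m :: nat
  assumes m_pos: "m \<ge> 1" and degree_q: "\<forall>i\<in>{1..k}. degree (q i) = m"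
    and tendsto_q: "\<forall>i\<in>{1..k}. filterlim (\<lambda>x. poly (q i) x) at_top at_top"
begin

lemma lead_coeff_q_pos: "i \<in> {1..k} \<Longrightarrow> lead_coeff (q i) > 0"
  using lead_coeff_pos_if_tendsto_at_top[of "q i"] degree_q tendsto_q m_pos by auto

lemma equal_degree_pair:
  assumes "i \<in> {1..k}" "j \<in> {1..k}"
  shows "equal_degree_polys (q i) (q j) m"
  using assms m_pos degree_q lead_coeff_q_pos by unfold_locales auto

lemma slope_pair:
  assumes "i \<in> {1..k}" "j \<in> {1..k}"
  shows "equal_degree_polys.slope (q i) (q j) m = cc q m j i"
  unfolding equal_degree_polys.slope_def[OF equal_degree_pair[OF assms]] cc_def ..

lemma has_density_common_value_if_shift_data:
  assumes T: "T \<subseteq> {1..k}" "T \<noteq> {}"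
    and shift: "rational_shift_data q m (Min T) (T - {Min T}) \<alpha> \<beta> x"
  shows "has_density (common_value q T)
           (real (card (compatible_residues (T - {Min T}) \<alpha> \<beta> x)) / real (Lcm (\<alpha> ` (T - {Min T}))))"
proof -
  define S where "S = T - {Min T}"
  have fin: "finite T" "finite S" using T finite_subset unfolding S_def by auto
  have t: "Min T \<in> {1..k}" using T fin by (meson Min_in subsetD)
  have S: "S \<subseteq> {1..k}" using T unfolding S_def by auto
  have ab: "\<forall>i\<in>S. \<alpha> i > 0 \<and> \<beta> i > 0" using shift unfolding rational_shift_data_def S_def by auto
  have "\<exists>N. \<forall>n\<ge>N. poly (q (Min T)) (real n) \<in> polyvals (q i) \<longleftrightarrow> on_lattice (\<alpha> i) (\<beta> i) (x i) n"
    if i: "i \<in> S" for i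
  proof -
    interpret equal_degree_polys "q (Min T)" "q i" m using equal_degree_pair t S i by blast
    have "cc q m i (Min T) = real (\<beta> i) / real (\<alpha> i)" "\<alpha> i > 0" "\<beta> i > 0"
      "\<forall>y. poly (q i) y = poly (q (Min T)) (cc q m (Min T) i * (y - x i))"
      using shift i unfolding rational_shift_data_def S_def by auto
    moreover have "cc q m i (Min T) * cc q m (Min T) i = 1"
      using cc_mult_cc lead_coeff_q_pos t S i by blast
    then have "cc q m (Min T) i = 1 / cc q m i (Min T)"
      by (metis div_by_0 mult_zero_left nonzero_eq_divide_eq zero_neq_one mult.commute)
    with calculation have "cc q m (Min T) i = real (\<alpha> i) / real (\<beta> i)" by simp
    ultimately show ?thesis
      using hits_eventually_iff_on_lattice slope_pair[OF t, of i] S i by auto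
  qed
  then obtain N where N: "\<forall>i\<in>S. \<forall>n\<ge>N i.
      poly (q (Min T)) (real n) \<in> polyvals (q i) \<longleftrightarrow> on_lattice (\<alpha> i) (\<beta> i) (x i) n"
    by metis
  define N0 where "N0 = Max (insert 1 (N ` S))"
  have "N i \<le> N0" if "i \<in> S" for i unfolding N0_def using fin that by auto
  moreover have "1 \<le> N0" unfolding N0_def using fin by auto
  ultimately have "\<forall>n\<ge>N0. common_value q T n \<longleftrightarrow> (\<forall>i\<in>S. on_lattice (\<alpha> i) (\<beta> i) (x i) n)"
    using N common_value_iff[OF fin(1) T(2)] unfolding S_def by (meson order_trans)
  from has_density_on_lattices[OF fin(2) ab this] show ?thesis unfolding S_def .
qed

lemma obstruction_if_no_shift_data:
  assumes T: "T \<subseteq> {1..k}" "T \<noteq> {}"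
    and none: "\<not> (\<exists>\<alpha> \<beta> x. rational_shift_data q m (Min T) (T - {Min T}) \<alpha> \<beta> x)"
  shows "\<exists>i\<in>T - {Min T}. cc q m i (Min T) \<notin> \<rat> \<or>
           \<not> (\<exists>xi\<in>\<rat>. \<forall>y. poly (q i) y = poly (q (Min T)) (cc q m (Min T) i * (y - xi)))"
proof (rule ccontr)
  define S where "S = T - {Min T}"
  have t: "Min T \<in> {1..k}" using T finite_subset by (metis Min_in finite_atLeastAtMost subsetD)
  assume "\<not> ?thesis"
  then have good: "cc q m i (Min T) \<in> \<rat>"
      "\<exists>xi\<in>\<rat>. \<forall>y. poly (q i) y = poly (q (Min T)) (cc q m (Min T) i * (y - xi))" if "i \<in> S" for i
    using that unfolding S_def by auto
  have "\<exists>a b xi. a > 0 \<and> b > 0 \<and> coprime a b \<and> cc q m i (Min T) = real b / real a \<and> xi \<in> \<rat> \<and>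
           (\<forall>y. poly (q i) y = poly (q (Min T)) (cc q m (Min T) i * (y - xi)))" if i: "i \<in> S" for i
  proof -
    have pos: "cc q m i (Min T) > 0" using cc_pos lead_coeff_q_pos t i T unfolding S_def by blast
    obtain b a :: nat where ba: "a \<noteq> 0" "\<bar>cc q m i (Min T)\<bar> = real b / real a" "coprime b a"
      using good(1)[OF i] by (rule Rats_abs_nat_div_natE)
    then have "b > 0" using pos by (cases "b = 0") auto
    then show ?thesis using ba pos good(2)[OF i] by (auto simp: coprime_commute)
  qed
  then obtain \<alpha> \<beta> x where "\<forall>i\<in>S. \<alpha> i > 0 \<and> \<beta> i > 0 \<and> coprime (\<alpha> i) (\<beta> i) \<and>
      cc q m i (Min T) = real (\<beta> i) / real (\<alpha> i) \<and> x i \<in> \<rat> \<and>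
      (\<forall>y. poly (q i) y = poly (q (Min T)) (cc q m (Min T) i * (y - x i)))"
    by metis
  then show False using none unfolding rational_shift_data_def S_def by blast
qed

lemma has_density_common_value_if_obstruction:
  assumes T: "T \<subseteq> {1..k}" "T \<noteq> {}" and i: "i \<in> T"
    and obstruction: "cc q m i (Min T) \<notin> \<rat> \<or>
           \<not> (\<exists>xi\<in>\<rat>. \<forall>y. poly (q i) y = poly (q (Min T)) (cc q m (Min T) i * (y - xi)))"
  shows "has_density (common_value q T) 0"
proof (rule has_density_zero_mono)
  have t: "Min T \<in> {1..k}" using T finite_subset by (metis Min_in finite_atLeastAtMost subsetD)
  have ik: "i \<in> {1..k}" using i T by auto
  interpret equal_degree_polys "q (Min T)" "q i" m using equal_degree_pair t ik by blast
  have slope: "slope = cc q m i (Min T)" using slope_pair t ik by blast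
  show "\<forall>n. common_value q T n \<longrightarrow> poly (q (Min T)) (real n) \<in> polyvals (q i)"
    using i unfolding common_value_def by blast
  show "has_density (\<lambda>n. poly (q (Min T)) (real n) \<in> polyvals (q i)) 0"
  proof (cases "slope \<in> \<rat>")
    case False
    then show ?thesis by (rule density_zero_if_slope_irrational)
  next
    case True
    have "finite {n::nat. poly (q (Min T)) (real n) \<in> polyvals (q i)}"
    proof (rule ccontr)
      assume "infinite {n::nat. poly (q (Min T)) (real n) \<in> polyvals (q i)}"
      then obtain d where d: "d \<in> \<rat>" "\<forall>y. poly (q i) (slope * y + d) = poly (q (Min T)) y"
        using linear_identity_if_infinitely_many_hits True by blast
      have inv: "slope * cc q m (Min T) i = 1"
        using cc_mult_cc[of q i "Min T" m] lead_coeff_q_pos t ik slope by simp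
      have "\<forall>y. poly (q i) y = poly (q (Min T)) (cc q m (Min T) i * (y - d))"
        using d(2) inv by (metis add.commute diff_add_cancel mult.assoc mult_1)
      then show False using obstruction True d(1) unfolding slope by blast
    qed
    then show ?thesis by (rule has_density_zero_if_finite)
  qed
qed

lemma has_density_common_value:
  assumes T: "T \<subseteq> {1..k}" "T \<noteq> {}"
  shows "has_density (common_value q T) (real_of_int (density_num q m T) / real_of_int (density_den q m T))"
proof (cases "\<exists>\<alpha> \<beta> x. rational_shift_data q m (Min T) (T - {Min T}) \<alpha> \<beta> x")
  case True
  then obtain \<alpha> \<beta> x where "shift_data q m T = (\<alpha>, \<beta>, x)"
    and "rational_shift_data q m (Min T) (T - {Min T}) \<alpha> \<beta> x"
    by (rule rational_shift_data_shift_data)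
  then show ?thesis using has_density_common_value_if_shift_data[OF T]
    unfolding density_num_def density_den_def if_P[OF True] by (simp add: Lcm_image_int)
next
  case False
  then obtain i where "i \<in> T" "cc q m i (Min T) \<notin> \<rat> \<or>
      \<not> (\<exists>xi\<in>\<rat>. \<forall>y. poly (q i) y = poly (q (Min T)) (cc q m (Min T) i * (y - xi)))"
    using obstruction_if_no_shift_data[OF T] by blast
  from has_density_common_value_if_obstruction[OF T this] show ?thesis
    unfolding density_num_def density_den_def if_not_P[OF False] by simp
qed

lemma density_num_den_bounds:
  assumes T: "T \<subseteq> {1..k}" "T \<noteq> {}"
  shows "0 \<le> density_num q m T \<and> 0 < density_den q m T \<and> density_num q m T \<le> density_den q m T"
proof (cases "\<exists>\<alpha> \<beta> x. rational_shift_data q m (Min T) (T - {Min T}) \<alpha> \<beta> x")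
  case True
  then obtain \<alpha> \<beta> x where sd: "shift_data q m T = (\<alpha>, \<beta>, x)"
    and shift: "rational_shift_data q m (Min T) (T - {Min T}) \<alpha> \<beta> x"
    by (rule rational_shift_data_shift_data)
  have fin: "finite (T - {Min T})" using T finite_subset by blast
  have ab: "\<forall>i\<in>T - {Min T}. \<alpha> i > 0 \<and> \<beta> i > 0" using shift unfolding rational_shift_data_def by auto
  show ?thesis using sd Lcm_pos_if_pos[OF fin, of \<alpha>] ab card_compatible_residues_le[OF fin ab, of x]
    unfolding density_num_def density_den_def if_P[OF True] by (simp add: Lcm_image_int)
next
  case False
  then show ?thesis unfolding density_num_def density_den_def if_not_P[OF False] by simp
qed

lemma density_num_den_singleton:
  assumes "card T = 1"
  shows "density_num q m T = 1 \<and> density_den q m T = 1"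
proof -
  obtain t where "T = {t}" using assms card_1_singletonE by blast
  then have ex: "\<exists>\<alpha> \<beta> x. rational_shift_data q m (Min T) (T - {Min T}) \<alpha> \<beta> x"
    and empty: "T - {Min T} = {}"
    unfolding rational_shift_data_def by auto
  show ?thesis using ex unfolding density_num_def density_den_def empty
    by (simp add: compatible_residues_empty split: prod.splits)
qed

lemma density_num_den_if_shift_data:
  assumes T: "T \<subseteq> {1..k}" "T \<noteq> {}"
    and shift': "rational_shift_data q m (Min T) (T - {Min T}) \<alpha>' \<beta>' x'"
  shows "density_den q m T = Lcm ((\<lambda>i. int (\<alpha>' i)) ` (T - {Min T})) \<and>
    density_num q m T = int (card (compatible_residues (T - {Min T}) \<alpha>' \<beta>' x'))"
proof -
  define S where "S = T - {Min T}"
  have fin: "finite S" using T finite_subset unfolding S_def by blast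
  obtain \<alpha> \<beta> x where sd: "shift_data q m T = (\<alpha>, \<beta>, x)"
    and shift: "rational_shift_data q m (Min T) S \<alpha> \<beta> x"
    using rational_shift_data_shift_data shift' unfolding S_def by blast
  have ex: "\<exists>\<alpha> \<beta> x. rational_shift_data q m (Min T) (T - {Min T}) \<alpha> \<beta> x" using shift' by blast
  have "\<alpha> ` S = \<alpha>' ` S" using rational_shift_data_alpha_unique[OF shift shift'[folded S_def]]
    by (auto intro: image_cong)
  moreover have "density_den q m T = int (Lcm (\<alpha> ` S))"
    using sd unfolding density_den_def if_P[OF ex] S_def by (simp add: Lcm_image_int)
  moreover have "Lcm (\<alpha> ` S) > 0"
    using Lcm_pos_if_pos[OF fin] shift unfolding rational_shift_data_def by auto
  moreover have "real (card (compatible_residues S \<alpha> \<beta> x)) / real (Lcm (\<alpha> ` S))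
      = real (card (compatible_residues S \<alpha>' \<beta>' x')) / real (Lcm (\<alpha>' ` S))"
    using has_density_common_value_if_shift_data[OF T shift[unfolded S_def]]
      has_density_common_value_if_shift_data[OF T shift'] unfolding has_density_def S_def
    by (rule LIMSEQ_unique)
  moreover have "density_num q m T = int (card (compatible_residues S \<alpha> \<beta> x))"
    using sd unfolding density_num_def if_P[OF ex] S_def by simp
  ultimately show ?thesis unfolding S_def[symmetric] by (simp add: Lcm_image_int)
qed

lemma density_num_zero_if_obstruction:
  assumes "\<exists>i\<in>T - {Min T}. cc q m i (Min T) \<notin> \<rat> \<or>
      \<not> (\<exists>xi\<in>\<rat>. \<forall>y. poly (q i) y = poly (q (Min T)) (cc q m (Min T) i * (y - xi)))"
  shows "density_num q m T = 0"
proof -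
  have "\<not> rational_shift_data q m (Min T) (T - {Min T}) \<alpha> \<beta> x" for \<alpha> \<beta> x
  proof
    assume shift: "rational_shift_data q m (Min T) (T - {Min T}) \<alpha> \<beta> x"
    obtain i where i: "i \<in> T - {Min T}" "cc q m i (Min T) \<notin> \<rat> \<or>
        \<not> (\<exists>xi\<in>\<rat>. \<forall>y. poly (q i) y = poly (q (Min T)) (cc q m (Min T) i * (y - xi)))"
      using assms by blast
    have "cc q m i (Min T) = real (\<beta> i) / real (\<alpha> i)" "x i \<in> \<rat>"
      "\<forall>y. poly (q i) y = poly (q (Min T)) (cc q m (Min T) i * (y - x i))"
      using shift i(1) unfolding rational_shift_data_def by auto
    then show False using i(2) by auto
  qed
  then have none: "\<not> (\<exists>\<alpha> \<beta> x. rational_shift_data q m (Min T) (T - {Min T}) \<alpha> \<beta> x)" by blast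
  show ?thesis unfolding density_num_def if_not_P[OF none] ..
qed

lemma Inter_Aset_eq:
  assumes T: "T \<subseteq> {1..k}" "T \<noteq> {}"
  shows "(\<Inter>j\<in>T. Aset q R j)
       = {x. R \<le> x \<and> (\<exists>n\<ge>1. common_value q T n \<and> poly (q 1) x = poly (q (Min T)) (real n))}"
proof -
  have t: "Min T \<in> T" using T finite_subset by (metis Min_in finite_atLeastAtMost)
  show ?thesis
  proof (intro equalityI subsetI)
    fix x assume x: "x \<in> (\<Inter>j\<in>T. Aset q R j)"
    then obtain n :: nat where "R \<le> x" "n \<ge> 1" "poly (q 1) x = poly (q (Min T)) (real n)"
      using t unfolding Aset_def polyvals_iff by blast
    moreover from this have "common_value q T n" using x unfolding common_value_def Aset_def by auto
    ultimately show "x \<in> {x. R \<le> x \<and> (\<exists>n\<ge>1. common_value q T n \<and> poly (q 1) x = poly (q (Min T)) (real n))}"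
      by auto
  qed (auto simp: Aset_def common_value_def)
qed

lemma preimage_intersection_density:
  assumes T: "T \<subseteq> {1..k}" "T \<noteq> {}" and "1 \<le> k"
    and mono: "strict_mono_on {R..} (poly (q 1))"
  shows "(\<lambda>r. real (card ((\<Inter>j\<in>T. Aset q R j) \<inter> {1..real r})) / real r)
           \<longlonglongrightarrow> cc q m (Min T) 1 * (real_of_int (density_num q m T) / real_of_int (density_den q m T))"
proof -
  have t: "Min T \<in> {1..k}" using T finite_subset by (metis Min_in finite_atLeastAtMost subsetD)
  have one: "1 \<in> {1..k}" using \<open>1 \<le> k\<close> by simp
  interpret equal_degree_polys "q 1" "q (Min T)" m using equal_degree_pair one t by blast
  show ?thesis
    using preimage_density[OF mono has_density_common_value[OF T]] slope_pair[OF one t]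
    unfolding Inter_Aset_eq[OF T] by simp
qed

lemma Aset_finite:
  assumes mono: "strict_mono_on {R..} (poly (q 1))" and i: "i \<in> {1..k}"
  shows "finite (Aset q R i \<inter> {1..r})"
proof -
  obtain S where S: "\<forall>s\<ge>S. poly (q i) s \<ge> poly (q 1) r + 1"
    using poly_eventually_ge[of "q i" "poly (q 1) r + 1"] lead_coeff_q_pos[OF i] degree_q m_pos i by auto
  have "\<forall>n\<ge>nat \<lceil>S\<rceil>. poly (q i) (real n) \<le> poly (q 1) r \<longrightarrow> n \<le> 0"
    using S by (smt (verit) le_nat_iff of_nat_ceiling of_nat_le_iff order_trans)
  from preimages_finite_and_card_le(1)[OF mono this, of "\<lambda>_. True"] show ?thesis
    unfolding Aset_def polyvals_iff by (auto simp: Collect_conj_eq[symmetric] conj_commute eq_commute)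
qed

lemma union_density_limit:
  assumes "1 \<le> k" and mono: "strict_mono_on {R..} (poly (q 1))"
  shows "(\<lambda>r. real (card ((\<Union>i\<in>{1..k}. Aset q R i) \<inter> {1..real r})) / real r) \<longlonglongrightarrow>
    (\<Sum>T | T \<subseteq> {1..k} \<and> T \<noteq> {}.
      (-1) ^ (card T + 1) * cc q m (Min T) 1 * (real_of_int (density_num q m T) / real_of_int (density_den q m T)))"
proof -
  have "real (card ((\<Union>i\<in>{1..k}. Aset q R i) \<inter> {1..real r})) / real r
      = (\<Sum>T | T \<subseteq> {1..k} \<and> T \<noteq> {}.
          (-1) ^ (card T + 1) * (real (card ((\<Inter>j\<in>T. Aset q R j) \<inter> {1..real r})) / real r))" for r
  proof -
    have "(\<Union>i\<in>{1..k}. Aset q R i) \<inter> {1..real r} = (\<Union>i\<in>{1..k}. Aset q R i \<inter> {1..real r})" by auto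
    moreover have "(\<Inter>i\<in>T. Aset q R i \<inter> {1..real r}) = (\<Inter>j\<in>T. Aset q R j) \<inter> {1..real r}"
      if "T \<noteq> {}" for T
      using that by auto
    ultimately show ?thesis
      using real_card_UNION[of "{1..k}" "\<lambda>i. Aset q R i \<inter> {1..real r}"] Aset_finite[OF mono]
      by (simp add: sum_divide_distrib)
  qed
  moreover have "(\<lambda>r. \<Sum>T | T \<subseteq> {1..k} \<and> T \<noteq> {}.
          (-1) ^ (card T + 1) * (real (card ((\<Inter>j\<in>T. Aset q R j) \<inter> {1..real r})) / real r))
      \<longlonglongrightarrow> (\<Sum>T | T \<subseteq> {1..k} \<and> T \<noteq> {}.
          (-1) ^ (card T + 1) * (cc q m (Min T) 1 * (real_of_int (density_num q m T) / real_of_int (density_den q m T))))"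
    by (intro tendsto_sum tendsto_mult_left preimage_intersection_density[OF _ _ assms(1) mono]) auto
  ultimately show ?thesis by (simp add: mult.assoc)
qed

text \<open>The union contains \<open>A\<^sub>1\<close>, whose density is \<open>c\<^sub>1\<^sub>,\<^sub>1 = 1\<close>.\<close>
lemma union_density_ge_one:
  assumes "1 \<le> k" and mono: "strict_mono_on {R..} (poly (q 1))"
  shows "(\<Sum>T | T \<subseteq> {1..k} \<and> T \<noteq> {}.
      (-1) ^ (card T + 1) * cc q m (Min T) 1 * (real_of_int (density_num q m T) / real_of_int (density_den q m T)))
    \<ge> 1"
proof -
  have one: "1 \<in> {1..k}" using assms(1) by simp
  have "(\<lambda>r. real (card (Aset q R 1 \<inter> {1..real r})) / real r) \<longlonglongrightarrow> 1"
    using preimage_intersection_density[of "{1}", OF _ _ assms(1) mono] one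
      density_num_den_singleton[of "{1}"] cc_self[of q 1 m, OF lead_coeff_q_pos[OF one]] by simp
  then show ?thesis
  proof (rule LIMSEQ_le[OF _ union_density_limit[OF assms]], intro exI allI impI)
    fix r :: nat
    have "finite (\<Union>i\<in>{1..k}. Aset q R i \<inter> {1..real r})"
      using Aset_finite[OF mono] by (intro finite_UN_I) auto
    then have "finite ((\<Union>i\<in>{1..k}. Aset q R i) \<inter> {1..real r})" by (rule finite_subset[rotated]) auto
    then have "card (Aset q R 1 \<inter> {1..real r}) \<le> card ((\<Union>i\<in>{1..k}. Aset q R i) \<inter> {1..real r})"
      using one by (intro card_mono) auto
    then show "real (card (Aset q R 1 \<inter> {1..real r})) / real r
        \<le> real (card ((\<Union>i\<in>{1..k}. Aset q R i) \<inter> {1..real r})) / real r"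
      by (intro divide_right_mono) auto
  qed
qed

end

theorem lemma4p1:
  fixes q :: "nat \<Rightarrow> real poly" and k m :: nat
  assumes k: "k \<ge> 1" and m: "m \<ge> 1"
    and deg: "\<forall>i\<in>{1..k}. degree (q i) = m"
    and lim: "\<forall>i\<in>{1..k}. filterlim (\<lambda>x. poly (q i) x) at_top at_top"
  shows "\<exists>M a :: nat set \<Rightarrow> int.
    (\<forall>T. T \<subseteq> {1..k} \<and> T \<noteq> {} \<longrightarrow>
      (let t1 = Min T; S = T - {t1} in
        M T \<ge> 0 \<and> a T > 0 \<and> a T \<ge> M T \<and>
        (\<lambda>r. real (card {n \<in> {1..r}. \<forall>i\<in>T. poly (q t1) (real n) \<in> polyvals (q i)}) / real r)
          \<longlonglongrightarrow> real_of_int (M T) / real_of_int (a T) \<and>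
        (card T = 1 \<longrightarrow> M T = 1 \<and> a T = 1) \<and>
        (card T > 1 \<longrightarrow>
          (\<forall>\<alpha> \<beta> :: nat \<Rightarrow> nat. \<forall>x :: nat \<Rightarrow> real.
             (\<forall>i\<in>S. \<alpha> i > 0 \<and> \<beta> i > 0 \<and> coprime (\<alpha> i) (\<beta> i) \<and>
                cc q m i t1 = real (\<beta> i) / real (\<alpha> i) \<and> x i \<in> \<rat> \<and>
                (\<forall>y. poly (q i) y = poly (q t1) (cc q m t1 i * (y - x i))))
             \<longrightarrow> a T = Lcm ((\<lambda>i. int (\<alpha> i)) ` S) \<and>
                 M T = int (card {w \<in> PiE S (\<lambda>i. Wset (\<alpha> i) (\<beta> i) (x i)).
                          \<forall>i\<in>S. \<forall>j\<in>S. w i - w j \<in> diffset (\<alpha> j) (\<alpha> i)})) \<and>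
          ((\<exists>i\<in>S. cc q m i t1 \<notin> \<rat>) \<or>
           (\<exists>i\<in>S. cc q m i t1 \<in> \<rat> \<and>
              \<not> (\<exists>xi\<in>\<rat>. \<forall>y. poly (q i) y = poly (q t1) (cc q m t1 i * (y - xi))))
           \<longrightarrow> M T = 0)) \<and>
        (\<forall>R. (\<forall>i\<in>{1..k}. strict_mono_on {R..} (poly (q i))) \<longrightarrow>
           (\<lambda>r. real (card ((\<Inter>j\<in>T. Aset q R j) \<inter> {1..real r})) / real r)
             \<longlonglongrightarrow> cc q m t1 1 * (real_of_int (M T) / real_of_int (a T))))) \<and>
    (\<forall>R. (\<forall>i\<in>{1..k}. strict_mono_on {R..} (poly (q i))) \<longrightarrow>
       (let c = (\<Sum>T | T \<subseteq> {1..k} \<and> T \<noteq> {}.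
                   (-1) ^ (card T + 1) * cc q m (Min T) 1 * (real_of_int (M T) / real_of_int (a T)))
        in (\<lambda>r. real (card ((\<Union>i\<in>{1..k}. Aset q R i) \<inter> {1..real r})) / real r) \<longlonglongrightarrow> c
           \<and> c \<ge> 1))"
proof -
  interpret poly_family q k m using m deg lim by unfold_locales
  have densities: "(\<lambda>r. real (card {n \<in> {1..r}. \<forall>i\<in>T. poly (q (Min T)) (real n) \<in> polyvals (q i)}) / real r)
      \<longlonglongrightarrow> real_of_int (density_num q m T) / real_of_int (density_den q m T)"
    if "T \<subseteq> {1..k}" "T \<noteq> {}" for T
    using has_density_common_value[OF that] unfolding has_density_def count_upto_def common_value_def .
  have mono_first: "strict_mono_on {R..} (poly (q 1))" if "\<forall>i\<in>{1..k}. strict_mono_on {R..} (poly (q i))" for R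
    using that k by simp
  show ?thesis
  proof (rule exI[of _ "density_num q m"], rule exI[of _ "density_den q m"], intro conjI allI impI,
      unfold Let_def, elim conjE, intro conjI allI impI)
    fix T assume T: "T \<subseteq> {1..k}" "T \<noteq> {}"
    show "density_num q m T \<ge> 0" "density_den q m T > 0" "density_den q m T \<ge> density_num q m T"
      using density_num_den_bounds[OF T] by auto
    show "density_num q m T = 1" "density_den q m T = 1" if "card T = 1"
      using density_num_den_singleton[OF that] by auto
    show "density_den q m T = Lcm ((\<lambda>i. int (\<alpha> i)) ` (T - {Min T}))"
      and "density_num q m T = int (card {w \<in> PiE (T - {Min T}) (\<lambda>i. Wset (\<alpha> i) (\<beta> i) (x i)).
          \<forall>i\<in>T - {Min T}. \<forall>j\<in>T - {Min T}. w i - w j \<in> diffset (\<alpha> j) (\<alpha> i)})"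
      if "\<forall>i\<in>T - {Min T}. \<alpha> i > 0 \<and> \<beta> i > 0 \<and> coprime (\<alpha> i) (\<beta> i) \<and>
          cc q m i (Min T) = real (\<beta> i) / real (\<alpha> i) \<and> x i \<in> \<rat> \<and>
          (\<forall>y. poly (q i) y = poly (q (Min T)) (cc q m (Min T) i * (y - x i)))" for \<alpha> \<beta> x
      using density_num_den_if_shift_data[OF T, of \<alpha> \<beta> x] that
      unfolding rational_shift_data_def compatible_residues_def by auto
    show "(\<lambda>r. real (card ((\<Inter>j\<in>T. Aset q R j) \<inter> {1..real r})) / real r)
        \<longlonglongrightarrow> cc q m (Min T) 1 * (real_of_int (density_num q m T) / real_of_int (density_den q m T))"
      if "\<forall>i\<in>{1..k}. strict_mono_on {R..} (poly (q i))" for R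
      using preimage_intersection_density[OF T k mono_first[OF that]] .
  qed (use densities density_num_zero_if_obstruction
      union_density_limit[OF k mono_first] union_density_ge_one[OF k mono_first] in auto)
qed

end
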